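(* Let $E\subset\mathbb{R}^n$ be a fixed set and let $m\geq 2$. Let $\mathbf{A}\in\mathbb{R}^{m\times n}$ be a random matrix whose rows $\mathbf{a}_1,\dots,\mathbf{a}_m$ are independent copies of a random vector $\mathbf{a}\in\mathbb{R}^n$. Let $\mathbf{B}\in\mathbb{R}^{\lfloor m/2\rfloor\times n}$ be the matrix with rows $\mathbf{b}_i=(\mathbf{a}_{2i-1}-\mathbf{a}_{2i})/\sqrt{2}$, $i=1,\dots,\lfloor m/2\rfloor$, and let $\mathbf{b}$ denote a random vector with the same distribution as $\mathbf{b}_1$. Let $\{\epsilon_k\}_{k=1}^{\lfloor m/2\rfloor}$ be a Rademacher sequence independent of everything else and set $\mathbf{h}=\frac{1}{\sqrt{\lfloor m/2\rfloor}}\sum_{k=1}^{\lfloor m/2\rfloor}\epsilon_k\mathbf{b}_k$. For $\xi>0$ define $$Q_{\xi}(E,\mathbf{b})=\inf_{\mathbf{u}\in E}\mathbb{P}\big(|\langle\mathbf{b},\mathbf{u}\rangle|\geq\xi\big),\qquad W_{\lfloor m/2\rfloor}(E,\mathbf{b})=\mathbb{E}\Big[\sup_{\mathbf{u}\in E}\langle\mathbf{h},\mathbf{u}\rangle\Big].$$ Then for every $t>0$ and $\xi>0$, with probability at least $1-e^{-2t^2}$, $$\inf_{\mathbf{v}\in E}\|\mathbf{A}\mathbf{v}\|_2\geq \xi\sqrt{\tfrac{m-1}{2}}\,Q_{2\xi}(E,\mathbf{b})-\xi t-2W_{\lfloor m/2\rfloor}(E,\mathbf{b}).$$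
   Context: A Rademacher variable takes the values $1$ and $-1$ with probability $1/2$ each; a Rademacher sequence is a sequence of independent Rademacher variables. *)

theory Defs
  imports "HOL-Probability.Probability"
begin

definition rademacher :: "'w measure \<Rightarrow> ('w \<Rightarrow> real) \<Rightarrow> bool" where
  "rademacher M X \<longleftrightarrow> X \<in> borel_measurable M
     \<and> measure M {w \<in> space M. X w = 1} = 1/2
     \<and> measure M {w \<in> space M. X w = -1} = 1/2"

definition brow :: "(nat \<Rightarrow> 'w \<Rightarrow> real^'n) \<Rightarrow> nat \<Rightarrow> 'w \<Rightarrow> real^'n" where
  "brow a i w = (1 / sqrt 2) *\<^sub>R (a (2*i - 1) w - a (2*i) w)"

definition hvec :: "nat \<Rightarrow> (nat \<Rightarrow> 'w \<Rightarrow> real^'n) \<Rightarrow> (nat \<Rightarrow> 'w \<Rightarrow> real) \<Rightarrow> 'w \<Rightarrow> real^'n" where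
  "hvec m a eps w = (1 / sqrt (real (m div 2))) *\<^sub>R (\<Sum>k=1..m div 2. eps k w *\<^sub>R brow a k w)"

definition Qxi :: "'w measure \<Rightarrow> real \<Rightarrow> (real^'n) set \<Rightarrow> ('w \<Rightarrow> real^'n) \<Rightarrow> real" where
  "Qxi M xi E b = (INF u\<in>E. measure M {w \<in> space M. \<bar>b w \<bullet> u\<bar> \<ge> xi})"

definition Wmean :: "'w measure \<Rightarrow> (real^'n) set \<Rightarrow> ('w \<Rightarrow> real^'n) \<Rightarrow> real" where
  "Wmean M E h = (\<integral>w. (SUP u\<in>E. h w \<bullet> u) \<partial>M)"

definition Anorm :: "nat \<Rightarrow> (nat \<Rightarrow> 'w \<Rightarrow> real^'n) \<Rightarrow> 'w \<Rightarrow> real^'n \<Rightarrow> real" where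
  "Anorm m a w v = sqrt (\<Sum>i=1..m. (a i w \<bullet> v)\<^sup>2)"

end

theory Submission
  imports Defs
begin

lemma sum_abs_bound:
  fixes f :: "'k \<Rightarrow> real"
  assumes "\<And>k. k \<in> I \<Longrightarrow> \<bar>f k\<bar> \<le> c"
  shows "\<bar>\<Sum>k\<in>I. f k\<bar> \<le> real (card I) * c"
  using order_trans[OF sum_abs sum_mono[OF assms]] by simp

lemma bdd_above_image_abs_le:
  fixes f :: "'v \<Rightarrow> real"
  shows "(\<And>v. v \<in> D \<Longrightarrow> \<bar>f v\<bar> \<le> B) \<Longrightarrow> bdd_above (f ` D)"
  by (rule bdd_aboveI2[of _ _ B]) (auto simp: abs_le_iff)

lemma abs_SUP_le:
  fixes f :: "'v \<Rightarrow> real"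
  assumes "D \<noteq> {}" "\<And>v. v \<in> D \<Longrightarrow> \<bar>f v\<bar> \<le> B"
  shows "\<bar>SUP v\<in>D. f v\<bar> \<le> B"
proof -
  obtain d where d: "d \<in> D" using assms(1) by auto
  have "f d \<le> (SUP v\<in>D. f v)" by (rule cSUP_upper[OF d bdd_above_image_abs_le[OF assms(2)]])
  moreover have "(SUP v\<in>D. f v) \<le> B" using assms by (intro cSUP_least) (auto simp: abs_le_iff)
  ultimately show ?thesis using assms(2)[OF d] by auto
qed

lemma cSUP_le_cSUP_plus:
  fixes f g :: "'v \<Rightarrow> real"
  assumes "D \<noteq> {}" "bdd_above (g ` D)" "\<And>v. v \<in> D \<Longrightarrow> f v \<le> g v + c"
  shows "(SUP v\<in>D. f v) \<le> (SUP v\<in>D. g v) + c"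
proof -
  have "f v \<le> (SUP v\<in>D. g v) + c" if "v \<in> D" for v
    using assms(3)[OF that] cSUP_upper[OF that assms(2)] by linarith
  then show ?thesis by (intro cSUP_least assms(1)) auto
qed

lemma cSUP_const_mult:
  fixes f :: "'v \<Rightarrow> real"
  assumes c: "c > 0" and D: "D \<noteq> {}" and bdd: "bdd_above (f ` D)"
  shows "(SUP v\<in>D. c * f v) = c * (SUP v\<in>D. f v)"
proof (rule antisym)
  show "(SUP v\<in>D. c * f v) \<le> c * (SUP v\<in>D. f v)"
    using c by (intro cSUP_least D) (auto intro!: mult_left_mono cSUP_upper bdd)
  obtain B where "\<And>v. v \<in> D \<Longrightarrow> f v \<le> B" using bdd by (auto simp: bdd_above_def)
  then have bdd': "bdd_above ((\<lambda>v. c * f v) ` D)"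
    using c by (intro bdd_aboveI2[of _ _ "c * B"]) (auto intro: mult_left_mono)
  have "(SUP v\<in>D. f v) \<le> (SUP v\<in>D. c * f v) / c"
    using c by (intro cSUP_least D) (auto simp: field_simps intro!: cSUP_upper bdd')
  then show "c * (SUP v\<in>D. f v) \<le> (SUP v\<in>D. c * f v)" using c by (simp add: field_simps)
qed

lemma le_cSUP_closure:
  fixes f :: "'a::metric_space \<Rightarrow> real"
  assumes "continuous_on UNIV f" "E \<subseteq> closure D" "bdd_above (f ` D)" "v \<in> E"
  shows "f v \<le> (SUP d\<in>D. f d)"
proof -
  have "f ` closure D \<subseteq> {..(SUP d\<in>D. f d)}"
    by (rule image_closure_subset) (use assms in \<open>auto intro: continuous_on_subset cSUP_upper\<close>)
  then show ?thesis using assms by auto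
qed

lemma cSUP_closure_eq:
  fixes f :: "'a::metric_space \<Rightarrow> real"
  assumes "continuous_on UNIV f" "D \<subseteq> E" "E \<subseteq> closure D" "D \<noteq> {}" and bdd: "bdd_above (f ` E)"
  shows "(SUP v\<in>E. f v) = (SUP v\<in>D. f v)"
proof (rule antisym)
  have "bdd_above (f ` D)" using bdd assms(2) by (meson bdd_above_mono image_mono)
  then show "(SUP v\<in>E. f v) \<le> (SUP v\<in>D. f v)"
    using assms by (intro cSUP_least) (auto intro!: le_cSUP_closure)
  show "(SUP v\<in>D. f v) \<le> (SUP v\<in>E. f v)"
    using assms by (intro cSUP_subset_mono bdd) auto
qed

definition bdd_SUP :: "'v set \<Rightarrow> ('v \<Rightarrow> real) \<Rightarrow> real" where
  "bdd_SUP D f = (if bdd_above (f ` D) then SUP v\<in>D. f v else 0)"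

lemma bdd_above_countable_iff:
  fixes f :: "'v \<Rightarrow> real"
  assumes "countable D" "D \<noteq> {}"
  shows "bdd_above (f ` D) \<longleftrightarrow> (\<exists>N::nat. \<forall>n::nat. f (from_nat_into D n) \<le> real N)"
proof
  assume "bdd_above (f ` D)"
  then obtain B where B: "\<forall>v\<in>D. f v \<le> B" by (auto simp: bdd_above_def)
  obtain N :: nat where "B \<le> real N" using real_arch_simple by blast
  then show "\<exists>N::nat. \<forall>n::nat. f (from_nat_into D n) \<le> real N"
    using B from_nat_into[OF assms(2)] by (auto intro: order_trans)
next
  assume "\<exists>N::nat. \<forall>n::nat. f (from_nat_into D n) \<le> real N"
  then obtain N :: nat where N: "\<forall>n. f (from_nat_into D n) \<le> real N" by blast
  show "bdd_above (f ` D)"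
    using N from_nat_into_surj[OF assms(1)] by (intro bdd_aboveI2[of _ _ "real N"]) metis
qed

lemma borel_measurable_bdd_SUP[measurable]:
  fixes f :: "'v \<Rightarrow> 'a \<Rightarrow> real"
  assumes D: "countable D" and [measurable]: "\<And>v. f v \<in> borel_measurable M"
  shows "(\<lambda>x. bdd_SUP D (\<lambda>v. f v x)) \<in> borel_measurable M"
proof (cases "D = {}")
  case False
  have [measurable]: "Measurable.pred M (\<lambda>x. bdd_above ((\<lambda>v. f v x) ` D))"
    unfolding bdd_above_countable_iff[OF D False] by measurable
  have "(\<lambda>x. SUP v\<in>D. if bdd_above ((\<lambda>v. f v x) ` D) then f v x else 0) \<in> borel_measurable M"
    by (rule borel_measurable_cSUP[OF D]) auto
  moreover have "bdd_SUP D (\<lambda>v. f v x) = (SUP v\<in>D. if bdd_above ((\<lambda>v. f v x) ` D) then f v x else 0)" for x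
    using False by (auto simp: bdd_SUP_def)
  ultimately show ?thesis by simp
qed (simp add: bdd_SUP_def)

lemma (in prob_space) abs_integral_le_const:
  fixes f :: "'a \<Rightarrow> real"
  assumes "f \<in> borel_measurable M" "\<And>x. \<bar>f x\<bar> \<le> c"
  shows "\<bar>\<integral>x. f x \<partial>M\<bar> \<le> c"
proof -
  have "\<bar>\<integral>x. f x \<partial>M\<bar> \<le> (\<integral>x. c \<partial>M)"
    using assms order_trans[OF abs_ge_zero assms(2)] by (intro order_trans[OF integral_abs_bound integral_mono] integrable_const_bound[where B=c]) auto
  then show ?thesis by (simp add: prob_space)
qed

lemma (in prob_space) integrable_SUP_abs_le:
  fixes f :: "'v \<Rightarrow> 'a \<Rightarrow> real"
  assumes "countable D" "D \<noteq> {}" "\<And>v. f v \<in> borel_measurable M" "\<And>v x. \<bar>f v x\<bar> \<le> B"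
  shows "integrable M (\<lambda>x. SUP v\<in>D. f v x)"
proof (rule integrable_const_bound[where B=B])
  show "(\<lambda>x. SUP v\<in>D. f v x) \<in> borel_measurable M"
    using assms by (intro borel_measurable_cSUP bdd_above_image_abs_le) auto
qed (use assms in \<open>auto intro!: abs_SUP_le\<close>)

lemma borel_measurable_PiM_component:
  assumes "k \<in> I" "g \<in> borel_measurable \<mu>"
  shows "(\<lambda>x. g (x k)) \<in> borel_measurable (PiM I (\<lambda>_. \<mu>))"
  using measurable_compose[OF measurable_component_singleton[OF assms(1)] assms(2)] .

lemma integral_PiM_component:
  fixes \<mu> :: "'a measure" and g :: "'a \<Rightarrow> real"
  assumes \<mu>: "prob_space \<mu>" and i: "i \<in> I" and g: "g \<in> borel_measurable \<mu>"
  shows "(\<integral>w. g (w i) \<partial>PiM I (\<lambda>_. \<mu>)) = (\<integral>y. g y \<partial>\<mu>)"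
  using integral_distr[OF measurable_component_singleton[OF i] g] distr_PiM_component[OF \<mu> i]
  by simp

lemma integral_PiM_reindex:
  fixes \<mu> :: "'a measure" and g :: "('i \<Rightarrow> 'a) \<Rightarrow> real"
  assumes \<mu>: "prob_space \<mu>" and f: "inj_on f I" "f \<in> I \<rightarrow> J"
    and g: "g \<in> borel_measurable (PiM I (\<lambda>_. \<mu>))"
  shows "(\<integral>w. g (\<lambda>i\<in>I. w (f i)) \<partial>PiM J (\<lambda>_. \<mu>)) = (\<integral>x. g x \<partial>PiM I (\<lambda>_. \<mu>))"
proof -
  have reindex_meas: "(\<lambda>w. \<lambda>i\<in>I. w (f i)) \<in> measurable (PiM J (\<lambda>_. \<mu>)) (PiM I (\<lambda>_. \<mu>))"
    using f by (intro measurable_restrict measurable_component_singleton) auto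
  have "(\<integral>x. g x \<partial>PiM I (\<lambda>_. \<mu>)) = (\<integral>x. g x \<partial>distr (PiM J (\<lambda>_. \<mu>)) (PiM I (\<lambda>_. \<mu>)) (\<lambda>w. \<lambda>i\<in>I. w (f i)))"
    using distr_PiM_reindex[of J "\<lambda>_. \<mu>" f I] \<mu> f by simp
  also have "\<dots> = (\<integral>w. g (\<lambda>i\<in>I. w (f i)) \<partial>PiM J (\<lambda>_. \<mu>))"
    by (rule integral_distr[OF reindex_meas g])
  finally show ?thesis ..
qed

section \<open>McDiarmid's bounded differences inequality\<close>

definition has_bounded_differences :: "'a measure \<Rightarrow> 'i set \<Rightarrow> real \<Rightarrow> (('i \<Rightarrow> 'a) \<Rightarrow> real) \<Rightarrow> bool" where
  "has_bounded_differences \<mu> I c f \<longleftrightarrow>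
     (\<forall>i\<in>I. \<forall>x\<in>space (PiM I (\<lambda>_. \<mu>)). \<forall>y\<in>space \<mu>. \<bar>f (x(i:=y)) - f x\<bar> \<le> c)"

lemma (in prob_space) Hoeffdings_lemma_oscillation:
  assumes l: "l > 0" and [measurable]: "v \<in> borel_measurable M"
    and osc: "\<And>y y'. y \<in> space M \<Longrightarrow> y' \<in> space M \<Longrightarrow> v y - v y' \<le> c"
  shows "(\<integral>\<^sup>+y. ennreal (exp (l * (v y - expectation v))) \<partial>M) \<le> ennreal (exp (l\<^sup>2 * c\<^sup>2 / 8))"
proof -
  obtain y0 where y0: "y0 \<in> space M" using not_empty by blast
  define a where "a = (INF y\<in>space M. v y)"
  have bdd: "bdd_below (v ` space M)"
    using osc[OF y0] by (intro bdd_belowI[of _ "v y0 - c"]) force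
  have "v y \<in> {a..a+c}" if y: "y \<in> space M" for y
  proof -
    have "a \<le> v y" unfolding a_def by (rule cINF_lower[OF bdd y])
    moreover have "v y - c \<le> a" unfolding a_def
      by (rule cINF_greatest[OF not_empty]) (use osc y in force)
    ultimately show ?thesis by simp
  qed
  then interpret interval_bounded_random_variable M v a "a + c"
    by unfold_locales auto
  show ?thesis using Hoeffdings_lemma_nn_integral[OF l] by simp
qed

lemma bounded_differences_integral_coordinate:
  fixes \<mu> :: "'a measure"
  assumes "prob_space \<mu>" and i: "i \<notin> I"
    and f_meas: "f \<in> borel_measurable (PiM (insert i I) (\<lambda>_. \<mu>))"
    and f_bound: "\<And>x. x \<in> space (PiM (insert i I) (\<lambda>_. \<mu>)) \<Longrightarrow> \<bar>f x\<bar> \<le> B"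
    and f_diff: "has_bounded_differences \<mu> (insert i I) c f"
  shows "has_bounded_differences \<mu> I c (\<lambda>x. \<integral>y. f (x(i:=y)) \<partial>\<mu>)"
  unfolding has_bounded_differences_def
proof (intro ballI)
  interpret \<mu>: prob_space \<mu> by fact
  fix j x y assume j: "j \<in> I" and x: "x \<in> space (PiM I (\<lambda>_. \<mu>))" and y: "y \<in> space \<mu>"
  have upd: "x'(i:=y') \<in> space (PiM (insert i I) (\<lambda>_. \<mu>))"
    if "x' \<in> space (PiM I (\<lambda>_. \<mu>))" "y' \<in> space \<mu>" for x' y'
    using that by (auto simp: space_PiM PiE_def extensional_def Pi_def)
  have section_integrable: "integrable \<mu> (\<lambda>y'. f (x'(i:=y')))"
    if "x' \<in> space (PiM I (\<lambda>_. \<mu>))" for x'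
  proof (rule \<mu>.integrable_const_bound[where B=B])
    show "(\<lambda>y'. f (x'(i:=y'))) \<in> borel_measurable \<mu>"
      using measurable_comp[OF measurable_component_update[OF that i] f_meas] by (simp add: comp_def)
  qed (use f_bound upd that in auto)
  have xj: "x(j:=y) \<in> space (PiM I (\<lambda>_. \<mu>))"
    using x y j by (auto simp: space_PiM PiE_def extensional_def Pi_def)
  have twist: "x(j:=y, i:=y') = (x(i:=y'))(j:=y)" for y'
    using i j by (auto simp: fun_upd_twist)
  have "\<bar>(\<integral>y'. f (x(j:=y, i:=y')) \<partial>\<mu>) - (\<integral>y'. f (x(i:=y')) \<partial>\<mu>)\<bar>
      = \<bar>\<integral>y'. f (x(j:=y, i:=y')) - f (x(i:=y')) \<partial>\<mu>\<bar>"
    by (subst Bochner_Integration.integral_diff) (auto intro!: section_integrable xj x)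
  also have "\<dots> \<le> (\<integral>y'. c \<partial>\<mu>)"
  proof (rule order_trans[OF integral_abs_bound integral_mono])
    show "integrable \<mu> (\<lambda>y'. \<bar>f (x(j:=y, i:=y')) - f (x(i:=y'))\<bar>)"
      by (intro integrable_abs Bochner_Integration.integrable_diff section_integrable xj x)
    show "\<bar>f (x(j:=y, i:=y')) - f (x(i:=y'))\<bar> \<le> c" if "y' \<in> space \<mu>" for y'
      using f_diff j y upd[OF x that] unfolding has_bounded_differences_def twist by blast
  qed simp
  finally show "\<bar>(\<integral>y'. f ((x(j:=y))(i:=y')) \<partial>\<mu>) - (\<integral>y'. f (x(i:=y')) \<partial>\<mu>)\<bar> \<le> c"
    by (simp add: \<mu>.prob_space)
qed

lemma bounded_differences_mgf:
  fixes \<mu> :: "'a measure" and I :: "'i set"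
  assumes \<mu>: "prob_space \<mu>" and "finite I" and l: "l > 0"
    and "f \<in> borel_measurable (PiM I (\<lambda>_. \<mu>))"
    and "\<And>x. x \<in> space (PiM I (\<lambda>_. \<mu>)) \<Longrightarrow> \<bar>f x\<bar> \<le> B"
    and "has_bounded_differences \<mu> I c f"
  shows "(\<integral>\<^sup>+x. ennreal (exp (l * (f x - (\<integral>x. f x \<partial>PiM I (\<lambda>_. \<mu>))))) \<partial>PiM I (\<lambda>_. \<mu>))
        \<le> ennreal (exp (l\<^sup>2 * (real (card I) * c\<^sup>2) / 8))"
  using assms(2,4-6)
proof (induction I arbitrary: f rule: finite_induct)
  case (empty f)
  interpret prob_space "PiM {} (\<lambda>_. \<mu>)" by (rule prob_space_PiM) (use \<mu> in auto)
  have sp: "space (PiM {} (\<lambda>_. \<mu>)) = {\<lambda>_. undefined}" by (simp add: space_PiM)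
  have Ef: "(\<integral>x. f x \<partial>PiM {} (\<lambda>_. \<mu>)) = f (\<lambda>_. undefined)"
    by (subst Bochner_Integration.integral_cong[where g="\<lambda>_. f (\<lambda>_. undefined)"])
      (use prob_space in \<open>auto simp: sp\<close>)
  have "(\<integral>\<^sup>+x. ennreal (exp (l * (f x - (\<integral>x. f x \<partial>PiM {} (\<lambda>_. \<mu>))))) \<partial>PiM {} (\<lambda>_. \<mu>))
      = (\<integral>\<^sup>+x. 1 \<partial>PiM ({} :: 'i set) (\<lambda>_. \<mu>))"
    unfolding Ef by (intro nn_integral_cong) (simp add: sp)
  then show ?case by (simp add: emeasure_space_1)
next
  case (insert i I f)
  let ?PI = "PiM I (\<lambda>_. \<mu>)"
  interpret PS: product_sigma_finite "\<lambda>_. \<mu>"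
    unfolding product_sigma_finite_def using prob_space_imp_sigma_finite[OF \<mu>] by simp
  interpret \<mu>: prob_space \<mu> by (rule \<mu>)
  interpret PII: prob_space "PiM (insert i I) (\<lambda>_. \<mu>)" by (rule prob_space_PiM) (use \<mu> in auto)
  note [measurable] = insert.prems(1)
  have f_upd[measurable]: "(\<lambda>(x, y). f (x(i := y))) \<in> borel_measurable (?PI \<Otimes>\<^sub>M \<mu>)"
    using measurable_comp[OF measurable_add_dim[of i I "\<lambda>_. \<mu>"] insert.prems(1)]
    by (simp add: comp_def case_prod_beta)
  have upd: "x(i:=y) \<in> space (PiM (insert i I) (\<lambda>_. \<mu>))" if "x \<in> space ?PI" "y \<in> space \<mu>" for x y
    using that by (auto simp: space_PiM PiE_def extensional_def Pi_def)
  define f1 where "f1 x = (\<integral>y. f (x(i:=y)) \<partial>\<mu>)" for x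
  define Ef where "Ef = (\<integral>x. f x \<partial>PiM (insert i I) (\<lambda>_. \<mu>))"
  have f1_meas[measurable]: "f1 \<in> borel_measurable ?PI"
    unfolding f1_def by (rule PS.borel_measurable_lebesgue_integral) simp
  have Ef: "Ef = (\<integral>x. f1 x \<partial>?PI)"
    unfolding f1_def Ef_def
    by (rule PS.product_integral_insert[OF insert.hyps PII.integrable_const_bound[where B=B]])
      (use insert.prems(2) in auto)
  have f1_bound: "\<bar>f1 x\<bar> \<le> B" if "x \<in> space ?PI" for x
  proof -
    have "\<bar>f1 x\<bar> \<le> (\<integral>y. \<bar>f (x(i:=y))\<bar> \<partial>\<mu>)" unfolding f1_def by (rule integral_abs_bound)
    also have "\<dots> \<le> (\<integral>y. B \<partial>\<mu>)"
      using measurable_Pair2[OF f_upd that]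
      by (intro integral_mono)
        (auto intro!: \<mu>.integrable_const_bound[where B=B] insert.prems(2) upd that simp del: fun_upd_apply)
    finally show ?thesis by (simp add: \<mu>.prob_space)
  qed
  have f1_diff: "has_bounded_differences \<mu> I c f1"
    unfolding f1_def by (rule bounded_differences_integral_coordinate[OF \<mu> insert.hyps(2) insert.prems])
  have IH: "(\<integral>\<^sup>+x. ennreal (exp (l * (f1 x - Ef))) \<partial>?PI) \<le> ennreal (exp (l\<^sup>2 * (real (card I) * c\<^sup>2) / 8))"
    unfolding Ef by (rule insert.IH[OF f1_meas f1_bound f1_diff])
  have coordinate: "(\<integral>\<^sup>+y. ennreal (exp (l * (f (x(i:=y)) - f1 x))) \<partial>\<mu>) \<le> ennreal (exp (l\<^sup>2 * c\<^sup>2 / 8))"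
    if x: "x \<in> space ?PI" for x
    unfolding f1_def
  proof (rule \<mu>.Hoeffdings_lemma_oscillation[OF l])
    show "(\<lambda>y. f (x(i:=y))) \<in> borel_measurable \<mu>" using measurable_Pair2[OF f_upd x] by simp
    fix y y' assume "y \<in> space \<mu>" "y' \<in> space \<mu>"
    then show "f (x(i:=y)) - f (x(i:=y')) \<le> c"
      using insert.prems(3) upd[OF x] unfolding has_bounded_differences_def
      by (metis abs_le_D1 fun_upd_upd insertI1)
  qed
  have "(\<integral>\<^sup>+x. ennreal (exp (l * (f x - Ef))) \<partial>PiM (insert i I) (\<lambda>_. \<mu>))
     = (\<integral>\<^sup>+x. (\<integral>\<^sup>+y. ennreal (exp (l * (f1 x - Ef))) * ennreal (exp (l * (f (x(i:=y)) - f1 x))) \<partial>\<mu>) \<partial>?PI)"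
    by (subst PS.product_nn_integral_insert[OF insert.hyps])
      (auto simp: ennreal_mult[symmetric] exp_add[symmetric] algebra_simps intro!: nn_integral_cong)
  also have "\<dots> = (\<integral>\<^sup>+x. ennreal (exp (l * (f1 x - Ef))) * (\<integral>\<^sup>+y. ennreal (exp (l * (f (x(i:=y)) - f1 x))) \<partial>\<mu>) \<partial>?PI)"
    by (intro nn_integral_cong nn_integral_cmult) (simp add: measurable_Pair2[OF f_upd])
  also have "\<dots> \<le> (\<integral>\<^sup>+x. ennreal (exp (l * (f1 x - Ef))) * ennreal (exp (l\<^sup>2 * c\<^sup>2 / 8)) \<partial>?PI)"
    by (intro nn_integral_mono mult_left_mono coordinate) auto
  also have "\<dots> = (\<integral>\<^sup>+x. ennreal (exp (l * (f1 x - Ef))) \<partial>?PI) * ennreal (exp (l\<^sup>2 * c\<^sup>2 / 8))"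
    by (rule nn_integral_multc) measurable
  also have "\<dots> \<le> ennreal (exp (l\<^sup>2 * (real (card I) * c\<^sup>2) / 8)) * ennreal (exp (l\<^sup>2 * c\<^sup>2 / 8))"
    by (intro mult_right_mono IH) auto
  also have "\<dots> = ennreal (exp (l\<^sup>2 * (real (card (insert i I)) * c\<^sup>2) / 8))"
    using insert.hyps by (simp add: ennreal_mult[symmetric] exp_add[symmetric] algebra_simps add_divide_distrib)
  finally show ?case unfolding Ef_def .
qed

theorem McDiarmid_inequality:
  fixes \<mu> :: "'a measure" and I :: "'i set"
  assumes \<mu>: "prob_space \<mu>" and fin: "finite I" and "I \<noteq> {}" and "c > 0" and s: "s > 0"
    and f_meas: "f \<in> borel_measurable (PiM I (\<lambda>_. \<mu>))"
    and f_bound: "\<And>x. x \<in> space (PiM I (\<lambda>_. \<mu>)) \<Longrightarrow> \<bar>f x\<bar> \<le> B"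
    and f_diff: "has_bounded_differences \<mu> I c f"
  shows "measure (PiM I (\<lambda>_. \<mu>)) {x\<in>space (PiM I (\<lambda>_. \<mu>)). f x \<ge> (\<integral>x. f x \<partial>PiM I (\<lambda>_. \<mu>)) + s}
           \<le> exp (-2 * s\<^sup>2 / (real (card I) * c\<^sup>2))"
proof -
  let ?P = "PiM I (\<lambda>_. \<mu>)"
  interpret P: prob_space ?P by (rule prob_space_PiM) (use \<mu> in auto)
  define Ef where "Ef = (\<integral>x. f x \<partial>?P)"
  define d where "d = real (card I) * c\<^sup>2"
  have d: "d > 0" using assms(2-4) by (simp add: d_def card_gt_0_iff)
  define l where "l = 4 * s / d"
  have l: "l > 0" using s d by (simp add: l_def)
  have "ennreal (measure ?P {x\<in>space ?P. f x \<ge> Ef + s}) = emeasure ?P {x\<in>space ?P. f x - Ef \<ge> s}"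
    by (simp add: P.emeasure_eq_measure algebra_simps)
  also have "\<dots> \<le> ennreal (exp (-l * s)) * (\<integral>\<^sup>+x. ennreal (exp (l * (f x - Ef))) * indicator (space ?P) x \<partial>?P)"
    by (intro Chernoff_ineq_nn_integral_ge l) (use f_meas in auto)
  also have "\<dots> = ennreal (exp (-l * s)) * (\<integral>\<^sup>+x. ennreal (exp (l * (f x - Ef))) \<partial>?P)"
    by (intro arg_cong2[where f="(*)"] nn_integral_cong) auto
  also have "\<dots> \<le> ennreal (exp (-l * s)) * ennreal (exp (l\<^sup>2 * d / 8))"
    unfolding Ef_def d_def by (intro mult_left_mono bounded_differences_mgf[OF \<mu> fin l f_meas f_bound f_diff]) auto
  also have "\<dots> = ennreal (exp (-2 * s\<^sup>2 / d))"
    using d by (simp add: ennreal_mult[symmetric] exp_add[symmetric] l_def field_simps power2_eq_square)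
  finally show ?thesis
    by (subst (asm) ennreal_le_iff) (simp_all add: Ef_def d_def)
qed

section \<open>The contraction principle for Rademacher sums\<close>

definition sign_vectors :: "'k set \<Rightarrow> ('k \<Rightarrow> real) set" where
  "sign_vectors I = PiE I (\<lambda>_. {-1, 1})"

lemma finite_sign_vectors: "finite I \<Longrightarrow> finite (sign_vectors I)"
  unfolding sign_vectors_def by (intro finite_PiE) auto

lemma card_sign_vectors: "finite I \<Longrightarrow> card (sign_vectors I) = 2 ^ card I"
  unfolding sign_vectors_def by (simp add: card_PiE numeral_2_eq_2)

lemma sign_vectors_abs: "e \<in> sign_vectors I \<Longrightarrow> k \<in> I \<Longrightarrow> \<bar>e k\<bar> = 1"
  unfolding sign_vectors_def using PiE_mem by fastforce

lemma sign_vectors_update_neg: "e \<in> sign_vectors I \<Longrightarrow> j \<in> I \<Longrightarrow> e(j := - e j) \<in> sign_vectors I"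
  unfolding sign_vectors_def by (auto simp: PiE_iff extensional_def)

lemma SUP_plus_SUP_minus_Lipschitz_le:
  fixes A t :: "'v \<Rightarrow> real" and \<phi> :: "real \<Rightarrow> real"
  assumes T: "T \<noteq> {}" and lip: "\<And>a b. \<bar>\<phi> a - \<phi> b\<bar> \<le> \<bar>a - b\<bar>"
    and bdd_plus: "bdd_above ((\<lambda>v. A v + t v) ` T)" and bdd_minus: "bdd_above ((\<lambda>v. A v - t v) ` T)"
  shows "(SUP v\<in>T. A v + \<phi> (t v)) + (SUP v\<in>T. A v - \<phi> (t v))
      \<le> (SUP v\<in>T. A v + t v) + (SUP v\<in>T. A v - t v)"
proof -
  define S where "S = (SUP v\<in>T. A v + t v) + (SUP v\<in>T. A v - t v)"
  have pair: "A v + \<phi> (t v) + (A v' - \<phi> (t v')) \<le> S" if "v \<in> T" "v' \<in> T" for v v'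
  proof -
    have "\<phi> (t v) - \<phi> (t v') \<le> \<bar>t v - t v'\<bar>" using lip[of "t v" "t v'"] by linarith
    moreover have "A u + t u \<le> (SUP v\<in>T. A v + t v)" "A u - t u \<le> (SUP v\<in>T. A v - t v)"
      if "u \<in> T" for u
      using that bdd_plus bdd_minus by (auto intro: cSUP_upper)
    ultimately show ?thesis using that unfolding S_def by (smt (verit))
  qed
  have "(SUP v\<in>T. A v + \<phi> (t v)) \<le> S - (A v' - \<phi> (t v'))" if "v' \<in> T" for v'
    by (rule cSUP_least[OF T]) (use pair that in force)
  then have "(SUP v\<in>T. A v - \<phi> (t v)) \<le> S - (SUP v\<in>T. A v + \<phi> (t v))"
    by (intro cSUP_least[OF T]) force
  then show ?thesis unfolding S_def by linarith
qed

lemma Rademacher_contraction_step: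
  fixes s :: "'k \<Rightarrow> 'v \<Rightarrow> real" and \<phi> :: "real \<Rightarrow> real"
  assumes fin: "finite I" and j: "j \<in> I" and T: "T \<noteq> {}"
    and lip: "\<And>a b. \<bar>\<phi> a - \<phi> b\<bar> \<le> \<bar>a - b\<bar>"
    and bdd: "\<And>e. e \<in> sign_vectors I \<Longrightarrow> bdd_above ((\<lambda>v. \<Sum>k\<in>I. e k * s k v) ` T)"
  shows "(\<Sum>e\<in>sign_vectors I. SUP v\<in>T. \<Sum>k\<in>I. e k * (s(j := \<phi> \<circ> s j)) k v)
      \<le> (\<Sum>e\<in>sign_vectors I. SUP v\<in>T. \<Sum>k\<in>I. e k * s k v)"
proof -
  define flip where "flip e = e(j := - e j)" for e :: "'k \<Rightarrow> real"
  define F where "F s' e = (SUP v\<in>T. \<Sum>k\<in>I. e k * s' k v)" for s' :: "'k \<Rightarrow> 'v \<Rightarrow> real" and e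
  let ?s' = "s(j := \<phi> \<circ> s j)"
  have flip_sum: "(\<Sum>e\<in>sign_vectors I. g (flip e)) = (\<Sum>e\<in>sign_vectors I. g e)"
    for g :: "('k \<Rightarrow> real) \<Rightarrow> real"
    by (rule sum.reindex_bij_witness[of _ flip flip])
      (auto simp: flip_def j sign_vectors_update_neg)
  have pair: "F ?s' e + F ?s' (flip e) \<le> F s e + F s (flip e)" if e: "e \<in> sign_vectors I" for e
  proof -
    define A where "A v = (\<Sum>k\<in>I-{j}. e k * s k v)" for v
    have split: "(\<Sum>k\<in>I. e' k * s'' k v) = (\<Sum>k\<in>I-{j}. e' k * s'' k v) + e' j * s'' j v"
      for e' :: "'k \<Rightarrow> real" and s'' :: "'k \<Rightarrow> 'v \<Rightarrow> real" and v by (simp add: sum.remove[OF fin j] add.commute)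
    have rest: "(\<Sum>k\<in>I-{j}. e' k * s'' k v) = A v"
      if "e' \<in> {e, flip e}" "s'' \<in> {s, ?s'}" for e' s'' v
      using that unfolding A_def flip_def by (auto intro!: sum.cong split: if_splits)
    have F: "F s'' e = (SUP v\<in>T. A v + e j * s'' j v)" "F s'' (flip e) = (SUP v\<in>T. A v - e j * s'' j v)"
      if "s'' \<in> {s, ?s'}" for s''
      unfolding F_def split using rest that by (auto simp: flip_def)
    have bdd_pm: "bdd_above ((\<lambda>v. A v + e j * s j v) ` T)" "bdd_above ((\<lambda>v. A v - e j * s j v) ` T)"
      using bdd[OF e] bdd[OF sign_vectors_update_neg[OF e j]]
      unfolding split by (auto simp: rest flip_def)
    have "e j = 1 \<or> e j = -1" using sign_vectors_abs[OF e j] by auto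
    then show ?thesis
      using SUP_plus_SUP_minus_Lipschitz_le[OF T lip, of A "s j"] bdd_pm
      by (auto simp: F add.commute)
  qed
  have "2 * (\<Sum>e\<in>sign_vectors I. F ?s' e) = (\<Sum>e\<in>sign_vectors I. F ?s' e + F ?s' (flip e))"
    by (simp add: sum.distrib flip_sum)
  also have "\<dots> \<le> (\<Sum>e\<in>sign_vectors I. F s e + F s (flip e))"
    by (intro sum_mono pair)
  also have "\<dots> = 2 * (\<Sum>e\<in>sign_vectors I. F s e)"
    by (simp add: sum.distrib flip_sum)
  finally show ?thesis unfolding F_def by simp
qed

theorem Rademacher_contraction:
  fixes t :: "'k \<Rightarrow> 'v \<Rightarrow> real" and \<phi> :: "real \<Rightarrow> real"
  assumes fin: "finite I" and T: "T \<noteq> {}"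
    and lip: "\<And>a b. \<bar>\<phi> a - \<phi> b\<bar> \<le> \<bar>a - b\<bar>" and \<phi>0: "\<phi> 0 = 0"
    and bdd: "\<And>e. e \<in> sign_vectors I \<Longrightarrow> bdd_above ((\<lambda>v. \<Sum>k\<in>I. e k * t k v) ` T)"
  shows "(\<Sum>e\<in>sign_vectors I. SUP v\<in>T. \<Sum>k\<in>I. e k * \<phi> (t k v))
      \<le> (\<Sum>e\<in>sign_vectors I. SUP v\<in>T. \<Sum>k\<in>I. e k * t k v)"
proof -
  define \<psi> where "\<psi> J k v = (if k \<in> J then \<phi> (t k v) else t k v)" for J k v
  define L where "L J = (\<Sum>e\<in>sign_vectors I. SUP v\<in>T. \<Sum>k\<in>I. e k * \<psi> J k v)" for J
  define bound where "bound = Max ((\<lambda>e. SUP v\<in>T. \<Sum>k\<in>I. e k * t k v) ` sign_vectors I)"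
  have abs_sum_le: "(\<Sum>k\<in>I. \<bar>t k v\<bar>) \<le> bound" if v: "v \<in> T" for v
  proof -
    define e where "e = (\<lambda>k\<in>I. if t k v \<ge> 0 then 1 else (-1::real))"
    have e: "e \<in> sign_vectors I" unfolding e_def sign_vectors_def by auto
    have "(\<Sum>k\<in>I. \<bar>t k v\<bar>) = (\<Sum>k\<in>I. e k * t k v)" by (intro sum.cong) (auto simp: e_def)
    also have "\<dots> \<le> (SUP v\<in>T. \<Sum>k\<in>I. e k * t k v)" by (rule cSUP_upper[OF v bdd[OF e]])
    also have "\<dots> \<le> bound"
      unfolding bound_def using e by (intro Max_ge finite_imageI finite_sign_vectors fin) auto
    finally show ?thesis .
  qed
  have bdd_\<psi>: "bdd_above ((\<lambda>v. \<Sum>k\<in>I. e k * \<psi> J k v) ` T)" if e: "e \<in> sign_vectors I" for e J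
  proof (rule bdd_aboveI2)
    fix v assume v: "v \<in> T"
    have "e k * \<psi> J k v \<le> \<bar>t k v\<bar>" if "k \<in> I" for k
      using sign_vectors_abs[OF e that] lip[of "t k v" 0] \<phi>0
      by (auto simp: \<psi>_def abs_mult intro: order_trans[OF abs_ge_self])
    then show "(\<Sum>k\<in>I. e k * \<psi> J k v) \<le> bound"
      using abs_sum_le[OF v] by (meson order_trans sum_mono)
  qed
  have "L J \<le> L {}" if "J \<subseteq> I" for J
    using finite_subset[OF that fin] that
  proof (induction J rule: finite_induct)
    case (insert j J)
    have "\<psi> (insert j J) = (\<psi> J)(j := \<phi> \<circ> \<psi> J j)"
      using insert.hyps by (auto simp: \<psi>_def fun_eq_iff)
    then have "L (insert j J) \<le> L J"
      unfolding L_def using insert.prems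
      by (simp only:) (rule Rademacher_contraction_step[OF fin _ T lip bdd_\<psi>], auto)
    then show ?case using insert by force
  qed simp
  from this[OF order_refl] show ?thesis unfolding L_def \<psi>_def by simp
qed

lemma (in prob_space) measure_rademacher_vimage:
  assumes X: "rademacher M X" and A: "A \<in> sets borel"
  shows "measure M (X -` A \<inter> space M) = (if 1 \<in> A then 1/2 else 0) + (if -1 \<in> A then 1/2 else 0)"
proof -
  have [measurable]: "X \<in> borel_measurable M" using X by (simp add: rademacher_def)
  define S1 where "S1 = {w\<in>space M. X w = 1}"
  define S2 where "S2 = {w\<in>space M. X w = -1}"
  have S[measurable]: "S1 \<in> events" "S2 \<in> events" unfolding S1_def S2_def by measurable
  have prob_S: "prob S1 = 1/2" "prob S2 = 1/2" using X by (auto simp: rademacher_def S1_def S2_def)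
  have disj: "S1 \<inter> S2 = {}" by (auto simp: S1_def S2_def)
  have "prob (S1 \<union> S2) = 1" using finite_measure_Union[OF S disj] prob_S by simp
  then have AE_S: "AE w in M. w \<in> S1 \<union> S2" by (subst AE_in_set_eq_1) auto
  define C where "C = (if 1 \<in> A then S1 else {}) \<union> (if -1 \<in> A then S2 else {})"
  have "measure M (X -` A \<inter> space M) = measure M C"
  proof (rule measure_eq_AE)
    show "AE x in M. (x \<in> X -` A \<inter> space M) = (x \<in> C)"
      using AE_S by eventually_elim (auto simp: C_def S1_def S2_def)
  qed (use A S in \<open>auto simp: C_def\<close>)
  also have "\<dots> = (if 1 \<in> A then 1/2 else 0) + (if -1 \<in> A then 1/2 else 0)"
    unfolding C_def using finite_measure_Union[OF S disj] prob_S by auto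
  finally show ?thesis .
qed

lemma (in prob_space) rademacher_distr_eq:
  assumes X: "rademacher M X" and Y: "rademacher M Y"
  shows "distr M borel X = distr M borel Y"
proof (rule measure_eqI)
  have [measurable]: "X \<in> borel_measurable M" "Y \<in> borel_measurable M"
    using X Y by (auto simp: rademacher_def)
  fix A :: "real set" assume "A \<in> sets (distr M borel X)"
  then have A: "A \<in> sets borel" by simp
  show "emeasure (distr M borel X) A = emeasure (distr M borel Y) A"
    using A by (simp add: emeasure_distr emeasure_eq_measure measure_rademacher_vimage[OF X A]
      measure_rademacher_vimage[OF Y A])
qed simp

locale rademacher_law = prob_space R for R :: "real measure" +
  assumes sets_eq_borel: "sets R = sets borel"
    and measure_one: "measure R {1} = 1/2"
    and measure_minus_one: "measure R {-1} = 1/2"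
begin

lemma AE_PiM_sign_vectors:
  assumes "finite I"
  shows "AE e in PiM I (\<lambda>_. R). e \<in> sign_vectors I"
proof -
  have "measure R {-1, 1} = measure R {-1} + measure R {1}"
    using finite_measure_Union[of "{-1}" "{1}"] sets_eq_borel by (simp add: insert_commute)
  then have "AE x in R. x \<in> {-1, 1::real}"
    using measure_one measure_minus_one sets_eq_borel by (subst AE_in_set_eq_1) auto
  then have "AE e in PiM I (\<lambda>_. R). e k \<in> {-1, 1}" if "k \<in> I" for k
    using that by (intro AE_PiM_component) (auto simp: prob_space_axioms)
  then have "AE e in PiM I (\<lambda>_. R). \<forall>k\<in>I. e k \<in> {-1, 1}"
    using assms by (intro eventually_ball_finite) auto
  then show ?thesis
    by (rule AE_mp[OF _ AE_I2]) (auto simp: sign_vectors_def space_PiM PiE_iff)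
qed

lemma measure_PiM_sign_vector:
  assumes fin: "finite I" and e: "e \<in> sign_vectors I"
  shows "{e} \<in> sets (PiM I (\<lambda>_. R))" and "measure (PiM I (\<lambda>_. R)) {e} = 1 / 2 ^ card I"
proof -
  interpret product_sigma_finite "\<lambda>_. R"
    unfolding product_sigma_finite_def by (simp add: prob_space_imp_sigma_finite prob_space_axioms)
  interpret P: prob_space "PiM I (\<lambda>_. R)" by (rule prob_space_PiM) (simp add: prob_space_axioms)
  have eq: "{e} = PiE I (\<lambda>k. {e k})"
    using e by (auto simp: sign_vectors_def PiE_iff extensional_def fun_eq_iff) metis
  show "{e} \<in> sets (PiM I (\<lambda>_. R))"
    unfolding eq by (rule sets_PiM_I_finite) (use fin sets_eq_borel in auto)
  have ek: "measure R {e k} = 1/2" if "k \<in> I" for k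
    using sign_vectors_abs[OF e that] measure_one measure_minus_one by (auto simp: abs_if split: if_splits)
  have "emeasure (PiM I (\<lambda>_. R)) {e} = (\<Prod>k\<in>I. emeasure R {e k})"
    unfolding eq by (rule emeasure_PiM[OF fin]) (use sets_eq_borel in auto)
  also have "\<dots> = (\<Prod>k\<in>I. ennreal (1/2))"
    by (intro prod.cong refl) (simp add: emeasure_eq_measure ek)
  also have "\<dots> = ennreal (1 / 2 ^ card I)"
    by (subst prod_ennreal) (simp_all add: power_one_over)
  finally show "measure (PiM I (\<lambda>_. R)) {e} = 1 / 2 ^ card I"
    by (simp add: P.emeasure_eq_measure)
qed

lemma integral_PiM_sign_vectors:
  fixes h :: "('i \<Rightarrow> real) \<Rightarrow> real"
  assumes fin: "finite I" and [measurable]: "h \<in> borel_measurable (PiM I (\<lambda>_. R))"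
  shows "(\<integral>e. h e \<partial>PiM I (\<lambda>_. R)) = (\<Sum>e\<in>sign_vectors I. h e) / 2 ^ card I"
proof -
  interpret P: prob_space "PiM I (\<lambda>_. R)" by (rule prob_space_PiM) (simp add: prob_space_axioms)
  have [measurable]: "sign_vectors I \<in> sets (PiM I (\<lambda>_. R))"
    unfolding sign_vectors_def by (rule sets_PiM_I_finite) (use fin sets_eq_borel in auto)
  have "(\<integral>e. h e \<partial>PiM I (\<lambda>_. R)) = (\<integral>e. h e * indicator (sign_vectors I) e \<partial>PiM I (\<lambda>_. R))"
    by (rule integral_cong_AE) (use AE_PiM_sign_vectors[OF fin] in \<open>auto elim!: eventually_mono\<close>)
  also have "\<dots> = (\<Sum>e\<in>sign_vectors I. h e * measure (PiM I (\<lambda>_. R)) {e})"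
    by (rule integral_indicator_finite_real)
      (auto simp: finite_sign_vectors fin measure_PiM_sign_vector[OF fin] P.emeasure_eq_measure)
  also have "\<dots> = (\<Sum>e\<in>sign_vectors I. h e) / 2 ^ card I"
    by (simp add: measure_PiM_sign_vector[OF fin] sum_divide_distrib)
  finally show ?thesis .
qed

end

lemma (in prob_space) rademacher_law_distr:
  assumes X: "rademacher M X"
  shows "rademacher_law (distr M borel X)"
proof -
  have [measurable]: "X \<in> borel_measurable M" using X by (simp add: rademacher_def)
  have "measure (distr M borel X) {c} = measure M {w \<in> space M. X w = c}" for c
    by (subst measure_distr) (auto intro!: arg_cong[where f="measure M"])
  then show ?thesis
    using X by (intro rademacher_law.intro rademacher_law_axioms.intro prob_space_distr)
      (simp_all add: rademacher_def)
qed

section \<open>Empirical deviations and symmetrization\<close>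

definition empirical_deviation :: "'a measure \<Rightarrow> ('v \<Rightarrow> 'a \<Rightarrow> real) \<Rightarrow> 'v set \<Rightarrow> 'i set \<Rightarrow> ('i \<Rightarrow> 'a) \<Rightarrow> real" where
  "empirical_deviation \<mu> q D I x = (SUP v\<in>D. (\<integral>y. q v y \<partial>\<mu>) - (\<Sum>k\<in>I. q v (x k)) / real (card I))"

definition rademacher_average :: "('v \<Rightarrow> 'a \<Rightarrow> real) \<Rightarrow> 'v set \<Rightarrow> 'i set \<Rightarrow> ('i \<Rightarrow> 'a) \<Rightarrow> real" where
  "rademacher_average q D I x = (\<Sum>e\<in>sign_vectors I. SUP v\<in>D. \<Sum>k\<in>I. e k * q v (x k)) / 2 ^ card I"

lemma abs_mean_deviation_le:
  fixes \<mu> :: "'a measure" and f :: "'a \<Rightarrow> real"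
  assumes "prob_space \<mu>" "finite I" "I \<noteq> {}"
    and "f \<in> borel_measurable \<mu>" and f_bound: "\<And>y. \<bar>f y\<bar> \<le> c"
  shows "\<bar>(\<integral>y. f y \<partial>\<mu>) - (\<Sum>k\<in>I. f (x k)) / real (card I)\<bar> \<le> 2 * c"
proof -
  have "\<bar>\<integral>y. f y \<partial>\<mu>\<bar> \<le> c"
    using assms by (intro prob_space.abs_integral_le_const) auto
  moreover have "\<bar>(\<Sum>k\<in>I. f (x k)) / real (card I)\<bar> \<le> c"
    using sum_abs_bound[of I "\<lambda>k. f (x k)" c] f_bound assms(2,3)
    by (simp add: abs_divide divide_le_eq card_gt_0_iff mult.commute)
  ultimately show ?thesis by linarith
qed

lemma abs_empirical_deviation_le:
  fixes \<mu> :: "'a measure" and q :: "'v \<Rightarrow> 'a \<Rightarrow> real"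
  assumes "prob_space \<mu>" "D \<noteq> {}" "finite I" "I \<noteq> {}"
    and "\<And>v. q v \<in> borel_measurable \<mu>" and "\<And>v y. \<bar>q v y\<bar> \<le> c"
  shows "\<bar>empirical_deviation \<mu> q D I x\<bar> \<le> 2 * c"
  unfolding empirical_deviation_def using assms by (intro abs_SUP_le abs_mean_deviation_le)

lemma borel_measurable_empirical_deviation:
  fixes \<mu> :: "'a measure" and q :: "'v \<Rightarrow> 'a \<Rightarrow> real"
  assumes "prob_space \<mu>" "countable D" "finite I" "I \<noteq> {}"
    and q_meas: "\<And>v. q v \<in> borel_measurable \<mu>" and "\<And>v y. \<bar>q v y\<bar> \<le> c"
  shows "empirical_deviation \<mu> q D I \<in> borel_measurable (PiM I (\<lambda>_. \<mu>))"
proof -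
  have [measurable]: "(\<lambda>x. q v (x k)) \<in> borel_measurable (PiM I (\<lambda>_. \<mu>))" if "k \<in> I" for v k
    using that q_meas by (rule borel_measurable_PiM_component)
  show ?thesis
    unfolding empirical_deviation_def[abs_def] using assms
    by (intro borel_measurable_cSUP bdd_above_image_abs_le[of _ _ "2 * c"] abs_mean_deviation_le) auto
qed

lemma integrable_rademacher_average:
  fixes \<mu> :: "'a measure" and q :: "'v \<Rightarrow> 'a \<Rightarrow> real"
  assumes \<mu>: "prob_space \<mu>" and D: "countable D" "D \<noteq> {}" and I: "finite I"
    and q_meas: "\<And>v. q v \<in> borel_measurable \<mu>" and q_bound: "\<And>v y. \<bar>q v y\<bar> \<le> c"
  shows "integrable (PiM I (\<lambda>_. \<mu>)) (rademacher_average q D I)"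
proof -
  interpret PI: prob_space "PiM I (\<lambda>_. \<mu>)" by (rule prob_space_PiM) (use \<mu> in auto)
  have "integrable (PiM I (\<lambda>_. \<mu>)) (\<lambda>x. SUP v\<in>D. \<Sum>k\<in>I. e k * q v (x k))" if "e \<in> sign_vectors I" for e
  proof (rule PI.integrable_SUP_abs_le[OF D, where B="real (card I) * c"])
    show "(\<lambda>x. \<Sum>k\<in>I. e k * q v (x k)) \<in> borel_measurable (PiM I (\<lambda>_. \<mu>))" for v
      by (auto intro!: borel_measurable_sum borel_measurable_times borel_measurable_PiM_component q_meas)
    show "\<bar>\<Sum>k\<in>I. e k * q v (x k)\<bar> \<le> real (card I) * c" for v x
      using sum_abs_bound[of I "\<lambda>k. e k * q v (x k)" c] q_bound sign_vectors_abs[OF that]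
      by (simp add: abs_mult)
  qed
  then have "integrable (PiM I (\<lambda>_. \<mu>)) (\<lambda>x. \<Sum>e\<in>sign_vectors I. SUP v\<in>D. \<Sum>k\<in>I. e k * q v (x k))"
    by (rule Bochner_Integration.integrable_sum)
  then show ?thesis
    unfolding rademacher_average_def[abs_def] by (rule integrable_divide)
qed

lemma integral_empirical_deviation_le_ghost_sample:
  fixes \<mu> :: "'a measure" and q :: "'v \<Rightarrow> 'a \<Rightarrow> real" and p :: nat
  assumes \<mu>: "prob_space \<mu>" and p: "p \<ge> 1" and D: "countable D" "D \<noteq> {}"
    and q_meas: "\<And>v. q v \<in> borel_measurable \<mu>" and q_bound: "\<And>v y. \<bar>q v y\<bar> \<le> c"
  shows "(\<integral>x. empirical_deviation \<mu> q D {1..p} x \<partial>PiM {1..p} (\<lambda>_. \<mu>))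
    \<le> (\<integral>w. (SUP v\<in>D. \<Sum>k\<in>{1..p}. q v (w (k+p)) - q v (w k)) \<partial>PiM {1..2*p} (\<lambda>_. \<mu>)) / real p"
proof -
  interpret \<mu>: prob_space \<mu> by (rule \<mu>)
  interpret PS: product_sigma_finite "\<lambda>_. \<mu>"
    unfolding product_sigma_finite_def using prob_space_imp_sigma_finite[OF \<mu>] by simp
  define I where "I = {1..p}"
  define I' where "I' = {p+1..2*p}"
  interpret PI: prob_space "PiM I (\<lambda>_. \<mu>)" by (rule prob_space_PiM) (use \<mu> in auto)
  interpret PI': prob_space "PiM I' (\<lambda>_. \<mu>)" by (rule prob_space_PiM) (use \<mu> in auto)
  interpret PJ: prob_space "PiM (I \<union> I') (\<lambda>_. \<mu>)" by (rule prob_space_PiM) (use \<mu> in auto)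
  have J: "{1..2*p} = I \<union> I'" "I \<inter> I' = {}" "finite I" "finite I'"
    unfolding I_def I'_def by auto
  have shift: "k + p \<in> I'" "k + p \<notin> I" if "k \<in> I" for k using that by (auto simp: I_def I'_def)
  have q_meas': "(\<lambda>w. q v (w k)) \<in> borel_measurable (PiM K (\<lambda>_. \<mu>))" if "k \<in> K" for v k K
    using that q_meas by (rule borel_measurable_PiM_component)
  define H where "H w = (SUP v\<in>D. \<Sum>k\<in>I. q v (w (k+p)) - q v (w k))" for w
  have q_diff: "\<bar>q v y - q v y'\<bar> \<le> 2 * c" for v y y'
    using q_bound[of v y] q_bound[of v y'] by linarith
  have H_bound: "\<bar>\<Sum>k\<in>I. q v (w (k+p)) - q v (w k)\<bar> \<le> real p * (2 * c)" for v w
    using sum_abs_bound[of I "\<lambda>k. q v (w (k+p)) - q v (w k)" "2 * c"] q_diff by (simp add: I_def)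
  have H_abs: "\<bar>H w\<bar> \<le> real p * (2 * c)" for w
    unfolding H_def by (rule abs_SUP_le[OF D(2) H_bound])
  have H_meas: "H \<in> borel_measurable (PiM (I \<union> I') (\<lambda>_. \<mu>))"
    unfolding H_def using D shift
    by (intro borel_measurable_cSUP bdd_above_image_abs_le[OF H_bound] borel_measurable_sum
        borel_measurable_diff q_meas') auto
  have H_merge_meas: "(\<lambda>(x, y). H (merge I I' (x, y))) \<in> borel_measurable (PiM I (\<lambda>_. \<mu>) \<Otimes>\<^sub>M PiM I' (\<lambda>_. \<mu>))"
    using measurable_comp[OF measurable_merge H_meas] by (simp add: comp_def case_prod_beta)
  have deviation_le: "empirical_deviation \<mu> q D I x \<le> (\<integral>y. H (merge I I' (x, y)) \<partial>PiM I' (\<lambda>_. \<mu>)) / real p"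
    if x: "x \<in> space (PiM I (\<lambda>_. \<mu>))" for x
    unfolding empirical_deviation_def
  proof (rule cSUP_least[OF D(2)])
    fix v assume v: "v \<in> D"
    have merge: "merge I I' (x, y) k = x k" "merge I I' (x, y) (k+p) = y (k+p)" if "k \<in> I" for k y
      using that shift[OF that] by (auto simp: merge_def)
    have ghost: "(\<integral>y. q v (y (k+p)) \<partial>PiM I' (\<lambda>_. \<mu>)) = (\<integral>y. q v y \<partial>\<mu>)" if k: "k \<in> I" for k
      by (rule integral_PiM_component[OF \<mu> shift(1)[OF k] q_meas])
    have integrable_ghost: "integrable (PiM I' (\<lambda>_. \<mu>)) (\<lambda>y. q v (y (k+p)))" if "k \<in> I" for k
      using q_bound q_meas'[OF shift(1)[OF that]] by (intro PI'.integrable_const_bound[where B=c]) auto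
    have "real p * (\<integral>y. q v y \<partial>\<mu>) - (\<Sum>k\<in>I. q v (x k)) = (\<Sum>k\<in>I. (\<integral>y. q v y \<partial>\<mu>) - q v (x k))"
      by (simp add: sum_subtractf I_def)
    also have "\<dots> = (\<Sum>k\<in>I. \<integral>y. q v (y (k+p)) - q v (x k) \<partial>PiM I' (\<lambda>_. \<mu>))"
      by (intro sum.cong refl) (simp add: integrable_ghost ghost PI'.prob_space)
    also have "\<dots> = (\<integral>y. (\<Sum>k\<in>I. q v (y (k+p)) - q v (x k)) \<partial>PiM I' (\<lambda>_. \<mu>))"
      by (rule Bochner_Integration.integral_sum[symmetric]) (simp add: integrable_ghost)
    also have "\<dots> = (\<integral>y. (\<Sum>k\<in>I. q v (merge I I' (x, y) (k+p)) - q v (merge I I' (x, y) k)) \<partial>PiM I' (\<lambda>_. \<mu>))"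
      by (intro Bochner_Integration.integral_cong refl sum.cong) (simp add: merge)
    also have "\<dots> \<le> (\<integral>y. H (merge I I' (x, y)) \<partial>PiM I' (\<lambda>_. \<mu>))"
    proof (rule integral_mono)
      show "integrable (PiM I' (\<lambda>_. \<mu>)) (\<lambda>y. H (merge I I' (x, y)))"
        using measurable_Pair2[OF H_merge_meas x] H_abs
        by (intro PI'.integrable_const_bound[where B="real p * (2 * c)"]) auto
      show "integrable (PiM I' (\<lambda>_. \<mu>)) (\<lambda>y. \<Sum>k\<in>I. q v (merge I I' (x, y) (k+p)) - q v (merge I I' (x, y) k))"
      proof (rule PI'.integrable_const_bound[where B="real p * (2 * c)"])
        show "AE y in PiM I' (\<lambda>_. \<mu>). norm (\<Sum>k\<in>I. q v (merge I I' (x, y) (k+p)) - q v (merge I I' (x, y) k))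
            \<le> real p * (2 * c)"
          unfolding real_norm_def by (intro AE_I2 H_bound)
      qed (auto intro!: borel_measurable_sum borel_measurable_diff q_meas' simp: merge shift)
      show "(\<Sum>k\<in>I. q v (merge I I' (x, y) (k+p)) - q v (merge I I' (x, y) k)) \<le> H (merge I I' (x, y))" for y
        unfolding H_def by (rule cSUP_upper[OF v bdd_above_image_abs_le[OF H_bound]])
    qed
    finally have "(real p * (\<integral>y. q v y \<partial>\<mu>) - (\<Sum>k\<in>I. q v (x k))) / real p
        \<le> (\<integral>y. H (merge I I' (x, y)) \<partial>PiM I' (\<lambda>_. \<mu>)) / real p"
      by (rule divide_right_mono) simp
    then show "(\<integral>y. q v y \<partial>\<mu>) - (\<Sum>k\<in>I. q v (x k)) / real (card I)
        \<le> (\<integral>y. H (merge I I' (x, y)) \<partial>PiM I' (\<lambda>_. \<mu>)) / real p"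
      using p by (simp add: I_def diff_divide_distrib)
  qed
  have "(\<integral>x. empirical_deviation \<mu> q D I x \<partial>PiM I (\<lambda>_. \<mu>))
      \<le> (\<integral>x. (\<integral>y. H (merge I I' (x, y)) \<partial>PiM I' (\<lambda>_. \<mu>)) / real p \<partial>PiM I (\<lambda>_. \<mu>))"
  proof (rule integral_mono[OF _ _ deviation_le])
    show "integrable (PiM I (\<lambda>_. \<mu>)) (empirical_deviation \<mu> q D I)"
      using abs_empirical_deviation_le[OF \<mu> D(2) J(3) _ q_meas q_bound]
        borel_measurable_empirical_deviation[OF \<mu> D(1) J(3) _ q_meas q_bound] p
      by (intro PI.integrable_const_bound[where B="2 * c"]) (auto simp: I_def)
    have "\<bar>\<integral>y. H (merge I I' (x, y)) \<partial>PiM I' (\<lambda>_. \<mu>)\<bar> \<le> real p * (2 * c)"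
      if "x \<in> space (PiM I (\<lambda>_. \<mu>))" for x
      using measurable_Pair2[OF H_merge_meas that] H_abs by (intro PI'.abs_integral_le_const) auto
    moreover have "(\<lambda>x. \<integral>y. H (merge I I' (x, y)) \<partial>PiM I' (\<lambda>_. \<mu>)) \<in> borel_measurable (PiM I (\<lambda>_. \<mu>))"
      using H_merge_meas by (intro sigma_finite_measure.borel_measurable_lebesgue_integral) (auto simp: PI'.sigma_finite_measure_axioms)
    ultimately show "integrable (PiM I (\<lambda>_. \<mu>)) (\<lambda>x. (\<integral>y. H (merge I I' (x, y)) \<partial>PiM I' (\<lambda>_. \<mu>)) / real p)"
      by (intro integrable_divide PI.integrable_const_bound[where B="real p * (2 * c)"]) auto
  qed
  also have "\<dots> = (\<integral>w. H w \<partial>PiM (I \<union> I') (\<lambda>_. \<mu>)) / real p"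
    using PS.product_integral_fold[OF J(2-4), of H] H_meas H_abs
    by (simp add: PJ.integrable_const_bound[where B="real p * (2 * c)"])
  finally show ?thesis unfolding I_def J(1)[symmetric, unfolded I_def] H_def .
qed

lemma integral_ghost_sample_le_signed:
  fixes \<mu> :: "'a measure" and q :: "'v \<Rightarrow> 'a \<Rightarrow> real" and p :: nat
  assumes \<mu>: "prob_space \<mu>" and D: "countable D" "D \<noteq> {}"
    and q_meas: "\<And>v. q v \<in> borel_measurable \<mu>" and q_bound: "\<And>v y. \<bar>q v y\<bar> \<le> c"
    and e: "e \<in> sign_vectors {1..p}"
  shows "(\<integral>w. (SUP v\<in>D. \<Sum>k\<in>{1..p}. q v (w (k+p)) - q v (w k)) \<partial>PiM {1..2*p} (\<lambda>_. \<mu>))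
    \<le> (\<integral>x. (SUP v\<in>D. \<Sum>k\<in>{1..p}. e k * q v (x k)) \<partial>PiM {1..p} (\<lambda>_. \<mu>))
      + (\<integral>x. (SUP v\<in>D. \<Sum>k\<in>{1..p}. - e k * q v (x k)) \<partial>PiM {1..p} (\<lambda>_. \<mu>))"
proof -
  define I where "I = {1..p}"
  define J where "J = {1..2*p}"
  interpret PI: prob_space "PiM I (\<lambda>_. \<mu>)" by (rule prob_space_PiM) (use \<mu> in auto)
  interpret PJ: prob_space "PiM J (\<lambda>_. \<mu>)" by (rule prob_space_PiM) (use \<mu> in auto)
  have e_pm: "e k = 1 \<or> e k = -1" if "k \<in> I" for k
    using sign_vectors_abs[OF e, of k] that unfolding I_def by linarith
  have q_meas': "(\<lambda>w. q v (w k)) \<in> borel_measurable (PiM K (\<lambda>_. \<mu>))" if "k \<in> K" for v k K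
    using that q_meas by (rule borel_measurable_PiM_component)
  have signed_bound: "\<bar>\<Sum>k\<in>I. s k * q v (x k)\<bar> \<le> real p * c" if "\<And>k. k \<in> I \<Longrightarrow> \<bar>s k\<bar> = 1" for s v x
    using sum_abs_bound[of I "\<lambda>k. s k * q v (x k)" c] q_bound that by (simp add: I_def abs_mult)
  have diff_bound: "\<bar>\<Sum>k\<in>I. s k * (q v (w (k+p)) - q v (w k))\<bar> \<le> real p * (2 * c)"
    if "\<And>k. k \<in> I \<Longrightarrow> \<bar>s k\<bar> = 1" for s v w
  proof -
    have "\<bar>s k * (q v (w (k+p)) - q v (w k))\<bar> \<le> 2 * c" if "k \<in> I" for k
      using q_bound[of v "w (k+p)"] q_bound[of v "w k"] \<open>k \<in> I \<Longrightarrow> \<bar>s k\<bar> = 1\<close>[OF that]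
      by (simp add: abs_mult)
    then show ?thesis using sum_abs_bound[of I _ "2 * c"] by (simp add: I_def)
  qed
  have sup_meas: "(\<lambda>w. SUP v\<in>D. \<Sum>k\<in>I. s k * (q v (w (k+p)) - q v (w k))) \<in> borel_measurable (PiM J (\<lambda>_. \<mu>))"
    if "\<And>k. k \<in> I \<Longrightarrow> \<bar>s k\<bar> = 1" for s
    using D that by (intro borel_measurable_cSUP bdd_above_image_abs_le[OF diff_bound] borel_measurable_sum
        borel_measurable_times borel_measurable_const borel_measurable_diff q_meas') (auto simp: I_def J_def)
  define A where "A s x = (SUP v\<in>D. \<Sum>k\<in>I. s k * q v (x k))" for s x
  have A_integrable: "integrable (PiM I (\<lambda>_. \<mu>)) (A s)" if s: "\<And>k. k \<in> I \<Longrightarrow> \<bar>s k\<bar> = 1" for s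
    unfolding A_def
    by (rule PI.integrable_SUP_abs_le[OF D _ signed_bound[OF s]])
      (auto intro!: borel_measurable_sum borel_measurable_times q_meas')
  have A_meas: "A s \<in> borel_measurable (PiM I (\<lambda>_. \<mu>))" if "\<And>k. k \<in> I \<Longrightarrow> \<bar>s k\<bar> = 1" for s
    using A_integrable[OF that] by (rule borel_measurable_integrable)
  have A_composed_integrable: "integrable (PiM J (\<lambda>_. \<mu>)) (\<lambda>w. A s (\<lambda>i\<in>I. w (f i)))"
    if f: "f \<in> I \<rightarrow> J" and s: "\<And>k. k \<in> I \<Longrightarrow> \<bar>s k\<bar> = 1" for f s
  proof (rule PJ.integrable_const_bound[where B="real p * c"])
    show "AE w in PiM J (\<lambda>_. \<mu>). norm (A s (\<lambda>i\<in>I. w (f i))) \<le> real p * c"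
      unfolding A_def real_norm_def by (intro AE_I2 abs_SUP_le D(2) signed_bound s)
    show "(\<lambda>w. A s (\<lambda>i\<in>I. w (f i))) \<in> borel_measurable (PiM J (\<lambda>_. \<mu>))"
      using f by (intro measurable_compose[OF _ A_meas[OF s]] measurable_restrict measurable_component_singleton) auto
  qed
  define \<tau> where "\<tau> j = (if j \<in> I \<and> e j = -1 then j + p else if j \<notin> I \<and> j - p \<in> I \<and> e (j - p) = -1 then j - p else j)" for j
  have \<tau>_J: "\<tau> \<in> J \<rightarrow> J" and \<tau>_\<tau>: "\<And>j. j \<in> J \<Longrightarrow> \<tau> (\<tau> j) = j"
    by (auto simp: \<tau>_def I_def J_def)
  have \<tau>_I: "\<tau> k = (if e k = -1 then k + p else k)" "\<tau> (k + p) = (if e k = -1 then k else k + p)"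
    if "k \<in> I" for k
    using that by (auto simp: \<tau>_def I_def)
  have shift_J: "k \<in> J" "k + p \<in> J" if "k \<in> I" for k using that by (auto simp: I_def J_def)
  have flip: "(\<Sum>k\<in>I. q v ((\<lambda>n\<in>J. w (\<tau> n)) (k+p)) - q v ((\<lambda>n\<in>J. w (\<tau> n)) k))
      = (\<Sum>k\<in>I. e k * (q v (w (k+p)) - q v (w k)))" for v w
    by (intro sum.cong refl) (use e_pm in \<open>auto simp: \<tau>_I shift_J\<close>)
  have unflip: "(\<Sum>k\<in>I. e k * (q v (w (k+p)) - q v (w k)))
      = (\<Sum>k\<in>I. e k * q v ((\<lambda>i\<in>I. w (i+p)) k)) + (\<Sum>k\<in>I. - e k * q v ((\<lambda>i\<in>I. w i) k))" for v w
    by (simp add: algebra_simps sum.distrib[symmetric] sum_subtractf[symmetric])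
  have abs_e: "\<bar>e k\<bar> = 1" "\<bar>- e k\<bar> = 1" if "k \<in> I" for k
    using e_pm[OF that] by auto
  have H_meas: "(\<lambda>w. SUP v\<in>D. \<Sum>k\<in>I. q v (w (k+p)) - q v (w k)) \<in> borel_measurable (PiM J (\<lambda>_. \<mu>))"
    using sup_meas[of "\<lambda>_. 1"] by simp
  have "(\<integral>w. (SUP v\<in>D. \<Sum>k\<in>I. q v (w (k+p)) - q v (w k)) \<partial>PiM J (\<lambda>_. \<mu>))
      = (\<integral>w. (SUP v\<in>D. \<Sum>k\<in>I. e k * (q v (w (k+p)) - q v (w k))) \<partial>PiM J (\<lambda>_. \<mu>))"
    using integral_PiM_reindex[OF \<mu> inj_on_inverseI[of J \<tau> \<tau>, OF \<tau>_\<tau>] \<tau>_J H_meas, symmetric]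
    unfolding flip .
  also have "\<dots> \<le> (\<integral>w. A e (\<lambda>i\<in>I. w (i+p)) + A (\<lambda>k. - e k) (\<lambda>i\<in>I. w i) \<partial>PiM J (\<lambda>_. \<mu>))"
  proof (rule integral_mono)
    show "integrable (PiM J (\<lambda>_. \<mu>)) (\<lambda>w. SUP v\<in>D. \<Sum>k\<in>I. e k * (q v (w (k+p)) - q v (w k)))"
      using sup_meas[OF abs_e(1)] diff_bound[OF abs_e(1)]
      by (intro PJ.integrable_const_bound[where B="real p * (2 * c)"] AE_I2) (auto intro!: abs_SUP_le D)
    show "integrable (PiM J (\<lambda>_. \<mu>)) (\<lambda>w. A e (\<lambda>i\<in>I. w (i+p)) + A (\<lambda>k. - e k) (\<lambda>i\<in>I. w i))"
      using A_composed_integrable[of "\<lambda>i. i+p" e] A_composed_integrable[of "\<lambda>i. i" "\<lambda>k. - e k"] shift_J abs_e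
      by auto
    show "(SUP v\<in>D. \<Sum>k\<in>I. e k * (q v (w (k+p)) - q v (w k))) \<le> A e (\<lambda>i\<in>I. w (i+p)) + A (\<lambda>k. - e k) (\<lambda>i\<in>I. w i)" for w
      unfolding A_def unflip
      by (intro cSUP_least D(2) add_mono cSUP_upper bdd_above_image_abs_le[where B="real p * c"] signed_bound abs_e)
  qed
  also have "\<dots> = (\<integral>x. A e x \<partial>PiM I (\<lambda>_. \<mu>)) + (\<integral>x. A (\<lambda>k. - e k) x \<partial>PiM I (\<lambda>_. \<mu>))"
    using A_composed_integrable[of "\<lambda>i. i+p" e] A_composed_integrable[of "\<lambda>i. i" "\<lambda>k. - e k"] shift_J abs_e
      integral_PiM_reindex[OF \<mu> _ _ A_meas, of "\<lambda>i. i+p" J e] integral_PiM_reindex[OF \<mu> _ _ A_meas, of "\<lambda>i. i" J "\<lambda>k. - e k"]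
    by (auto simp: Bochner_Integration.integral_add)
  finally show ?thesis unfolding A_def I_def J_def .
qed

theorem symmetrization:
  fixes \<mu> :: "'a measure" and q :: "'v \<Rightarrow> 'a \<Rightarrow> real" and p :: nat
  assumes \<mu>: "prob_space \<mu>" and p: "p \<ge> 1" and D: "countable D" "D \<noteq> {}"
    and q_meas: "\<And>v. q v \<in> borel_measurable \<mu>" and q_bound: "\<And>v y. \<bar>q v y\<bar> \<le> c"
  shows "(\<integral>x. empirical_deviation \<mu> q D {1..p} x \<partial>PiM {1..p} (\<lambda>_. \<mu>))
    \<le> 2 / real p * (\<integral>x. rademacher_average q D {1..p} x \<partial>PiM {1..p} (\<lambda>_. \<mu>))"
proof -
  define I where "I = {1..p}"
  interpret PI: prob_space "PiM I (\<lambda>_. \<mu>)" by (rule prob_space_PiM) (use \<mu> in auto)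
  define A where "A e x = (SUP v\<in>D. \<Sum>k\<in>I. e k * q v (x k))" for e x
  define ghost where "ghost = (\<integral>w. (SUP v\<in>D. \<Sum>k\<in>I. q v (w (k+p)) - q v (w k)) \<partial>PiM {1..2*p} (\<lambda>_. \<mu>))"
  define neg where "neg e = (\<lambda>k\<in>I. - e k)" for e :: "nat \<Rightarrow> real"
  have neg: "neg e \<in> sign_vectors I" "neg (neg e) = e" if "e \<in> sign_vectors I" for e
    using that by (auto simp: neg_def sign_vectors_def PiE_iff extensional_def fun_eq_iff)
  have A_neg: "A (neg e) = A (\<lambda>k. - e k)" for e
    unfolding A_def neg_def by (auto intro!: SUP_cong sum.cong)
  have A_integrable: "integrable (PiM I (\<lambda>_. \<mu>)) (A e)" if "e \<in> sign_vectors I" for e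
    unfolding A_def
  proof (rule PI.integrable_SUP_abs_le[OF D, where B="real p * c"])
    show "(\<lambda>x. \<Sum>k\<in>I. e k * q v (x k)) \<in> borel_measurable (PiM I (\<lambda>_. \<mu>))" for v
      by (auto intro!: borel_measurable_sum borel_measurable_times borel_measurable_PiM_component q_meas)
    show "\<bar>\<Sum>k\<in>I. e k * q v (x k)\<bar> \<le> real p * c" for v x
      using sum_abs_bound[of I "\<lambda>k. e k * q v (x k)" c] q_bound sign_vectors_abs[OF that]
      by (simp add: abs_mult I_def)
  qed
  have "real (card (sign_vectors I)) * ghost = (\<Sum>e\<in>sign_vectors I. ghost)"
    by simp
  also have "\<dots> \<le> (\<Sum>e\<in>sign_vectors I. (\<integral>x. A e x \<partial>PiM I (\<lambda>_. \<mu>)) + (\<integral>x. A (neg e) x \<partial>PiM I (\<lambda>_. \<mu>)))"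
    unfolding ghost_def A_neg unfolding A_def I_def
    by (intro sum_mono integral_ghost_sample_le_signed[OF \<mu> D q_meas q_bound])
  also have "\<dots> = 2 * (\<Sum>e\<in>sign_vectors I. \<integral>x. A e x \<partial>PiM I (\<lambda>_. \<mu>))"
    using sum.reindex_bij_witness[of "sign_vectors I" neg neg "sign_vectors I" "\<lambda>e. \<integral>x. A e x \<partial>PiM I (\<lambda>_. \<mu>)"] neg
    by (simp add: sum.distrib)
  also have "\<dots> = 2 * (\<integral>x. (\<Sum>e\<in>sign_vectors I. A e x) \<partial>PiM I (\<lambda>_. \<mu>))"
    by (simp add: Bochner_Integration.integral_sum A_integrable)
  also have "\<dots> = 2 * real (card (sign_vectors I)) * (\<integral>x. rademacher_average q D I x \<partial>PiM I (\<lambda>_. \<mu>))"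
    unfolding rademacher_average_def A_def by (simp add: card_sign_vectors I_def)
  finally have ghost_le: "ghost \<le> 2 * (\<integral>x. rademacher_average q D I x \<partial>PiM I (\<lambda>_. \<mu>))"
    by (simp add: card_sign_vectors I_def mult.assoc)
  have "(\<integral>x. empirical_deviation \<mu> q D I x \<partial>PiM I (\<lambda>_. \<mu>)) \<le> ghost / real p"
    using integral_empirical_deviation_le_ghost_sample[OF \<mu> p D q_meas q_bound] unfolding ghost_def I_def .
  also have "\<dots> \<le> 2 * (\<integral>x. rademacher_average q D I x \<partial>PiM I (\<lambda>_. \<mu>)) / real p"
    using ghost_le by (rule divide_right_mono) simp
  finally show ?thesis unfolding I_def by simp
qed

lemma bounded_differences_empirical_deviation:
  fixes \<mu> :: "'a measure" and q :: "'v \<Rightarrow> 'a \<Rightarrow> real"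
  assumes \<mu>: "prob_space \<mu>" and D: "D \<noteq> {}" and I: "finite I"
    and q_meas: "\<And>v. q v \<in> borel_measurable \<mu>" and q_nonneg: "\<And>v y. 0 \<le> q v y" and q_le: "\<And>v y. q v y \<le> c"
  shows "has_bounded_differences \<mu> I (c / real (card I)) (empirical_deviation \<mu> q D I)"
  unfolding has_bounded_differences_def
proof (intro ballI)
  fix i x y assume i: "i \<in> I"
  define dev where "dev x v = (\<integral>y. q v y \<partial>\<mu>) - (\<Sum>k\<in>I. q v (x k)) / real (card I)" for x v
  have dev_upd: "\<bar>dev (x(i:=y)) v - dev x v\<bar> \<le> c / real (card I)" for v
  proof -
    have "dev (x(i:=y)) v - dev x v = (q v (x i) - q v y) / real (card I)"
      by (simp add: dev_def sum.remove[OF I i] diff_divide_distrib[symmetric])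
    moreover have "\<bar>q v (x i) - q v y\<bar> \<le> c"
      using q_nonneg[of v "x i"] q_nonneg[of v y] q_le[of v "x i"] q_le[of v y] by linarith
    ultimately show ?thesis by (simp add: abs_divide divide_right_mono)
  qed
  have bdd: "bdd_above (dev x' ` D)" for x'
  proof (rule bdd_aboveI2)
    fix v
    have "(\<integral>y. q v y \<partial>\<mu>) \<le> c"
      using prob_space.abs_integral_le_const[OF \<mu> q_meas, of v c] q_nonneg q_le by (simp add: abs_le_iff)
    moreover have "0 \<le> (\<Sum>k\<in>I. q v (x' k)) / real (card I)"
      using q_nonneg by (simp add: sum_nonneg)
    ultimately show "dev x' v \<le> c" by (simp add: dev_def)
  qed
  have "empirical_deviation \<mu> q D I (x(i:=y)) \<le> empirical_deviation \<mu> q D I x + c / real (card I)"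
    "empirical_deviation \<mu> q D I x \<le> empirical_deviation \<mu> q D I (x(i:=y)) + c / real (card I)"
    unfolding empirical_deviation_def dev_def[symmetric]
    using dev_upd by (intro cSUP_le_cSUP_plus D bdd, smt (verit))+
  then show "\<bar>empirical_deviation \<mu> q D I (x(i:=y)) - empirical_deviation \<mu> q D I x\<bar> \<le> c / real (card I)"
    by linarith
qed

lemma empirical_deviation_concentration:
  fixes \<mu> :: "'a measure" and q :: "'v \<Rightarrow> 'a \<Rightarrow> real" and p :: nat
  assumes \<mu>: "prob_space \<mu>" and p: "p \<ge> 1" and D: "countable D" "D \<noteq> {}"
    and q_meas: "\<And>v. q v \<in> borel_measurable \<mu>" and q_nonneg: "\<And>v y. 0 \<le> q v y" and q_le: "\<And>v y. q v y \<le> c"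
    and c: "c > 0" and s: "s > 0"
  shows "measure (PiM {1..p} (\<lambda>_. \<mu>))
      {x \<in> space (PiM {1..p} (\<lambda>_. \<mu>)). empirical_deviation \<mu> q D {1..p} x
         \<ge> (\<integral>x. empirical_deviation \<mu> q D {1..p} x \<partial>PiM {1..p} (\<lambda>_. \<mu>)) + s}
    \<le> exp (- 2 * real p * s\<^sup>2 / c\<^sup>2)"
proof -
  have q_abs: "\<bar>q v y\<bar> \<le> c" for v y using q_nonneg[of v y] q_le[of v y] by simp
  have finite: "finite {1..p}" and ne: "{1..p} \<noteq> {}" using p by auto
  have "measure (PiM {1..p} (\<lambda>_. \<mu>))
      {x \<in> space (PiM {1..p} (\<lambda>_. \<mu>)). empirical_deviation \<mu> q D {1..p} x
         \<ge> (\<integral>x. empirical_deviation \<mu> q D {1..p} x \<partial>PiM {1..p} (\<lambda>_. \<mu>)) + s}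
    \<le> exp (- 2 * s\<^sup>2 / (real (card {1..p}) * (c / real (card {1..p}))\<^sup>2))"
    using p c
    by (intro McDiarmid_inequality[where B="2 * c", OF \<mu> finite ne _ s
        borel_measurable_empirical_deviation[where q=q, OF \<mu> D(1) finite ne q_meas q_abs]
        abs_empirical_deviation_le[where q=q, OF \<mu> D(2) finite ne q_meas q_abs]
        bounded_differences_empirical_deviation[where q=q, OF \<mu> D(2) finite q_meas q_nonneg q_le]]) auto
  also have "\<dots> = exp (- 2 * real p * s\<^sup>2 / c\<^sup>2)"
    using p c by (simp add: power2_eq_square field_simps)
  finally show ?thesis .
qed

section \<open>The symmetrized rows\<close>

lemma borel_measurable_brow[measurable]:
  assumes "a (2*k-1) \<in> borel_measurable M" "a (2*k) \<in> borel_measurable M"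
  shows "brow a k \<in> borel_measurable M"
  using assms unfolding brow_def[abs_def] by measurable

lemma (in prob_space) indep_vars_brow:
  fixes a :: "nat \<Rightarrow> 'a \<Rightarrow> real^'n"
  assumes p: "2 * p \<le> m" and ind: "indep_vars (\<lambda>_. borel) a {1..m}"
  shows "indep_vars (\<lambda>_. borel) (brow a) {1..p}"
proof -
  define K where "K k = {2*k-1, 2*k}" for k :: nat
  define g where "g k x = (1 / sqrt 2) *\<^sub>R (x (2*k-1) - x (2*k))" for k and x :: "nat \<Rightarrow> real^'n"
  have "indep_vars (\<lambda>k. PiM (K k) (\<lambda>_. borel)) (\<lambda>k w. \<lambda>i\<in>K k. a i w) {1..p}"
    using p by (intro indep_vars_restrict[OF ind]) (auto simp: K_def disjoint_family_on_def)
  moreover have "g k \<in> borel_measurable (PiM (K k) (\<lambda>_. borel))" for k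
  proof -
    have [measurable]: "(\<lambda>x. x i) \<in> borel_measurable (PiM (K k) (\<lambda>_. borel :: (real^'n) measure))"
      if "i \<in> K k" for i
      using that by (rule measurable_component_singleton)
    show ?thesis unfolding g_def by (measurable, auto simp: K_def)
  qed
  ultimately have "indep_vars (\<lambda>_. borel) (\<lambda>k w. g k (\<lambda>i\<in>K k. a i w)) {1..p}"
    by (rule indep_vars_compose2)
  then show ?thesis
    by (rule indep_vars_cong[THEN iffD1, rotated -1]) (auto simp: K_def g_def brow_def fun_eq_iff)
qed

lemma (in prob_space) indep_var_of_indep_vars:
  assumes ind: "indep_vars M' X I" and "i \<in> I" "j \<in> I" "i \<noteq> j"
  shows "indep_var (M' i) (X i) (M' j) (X j)"
proof -
  have "indep_var (M' i) ((\<lambda>f. f i) \<circ> (\<lambda>w. \<lambda>l\<in>{i}. X l w)) (M' j) ((\<lambda>f. f j) \<circ> (\<lambda>w. \<lambda>l\<in>{j}. X l w))"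
    using assms by (intro indep_var_compose[OF indep_var_restrict[OF ind]] measurable_component_singleton) auto
  then show ?thesis by (simp add: comp_def)
qed

lemma (in prob_space) distr_brow:
  fixes a :: "nat \<Rightarrow> 'a \<Rightarrow> real^'n"
  assumes ind: "indep_vars (\<lambda>_. borel) a {1..m}"
    and ident: "\<And>i. i \<in> {1..m} \<Longrightarrow> distr M borel (a i) = distr M borel (a 1)"
    and k: "k \<in> {1..m div 2}"
  shows "distr M borel (brow a k)
    = distr (distr M borel (a 1) \<Otimes>\<^sub>M distr M borel (a 1)) borel (\<lambda>(x, y). (1 / sqrt 2) *\<^sub>R (x - y))"
proof -
  define pair where "pair w = (a (2*k-1) w, a (2*k) w)" for w
  have ij: "2*k-1 \<in> {1..m}" "2*k \<in> {1..m}" "2*k-1 \<noteq> 2*k" using k by auto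
  have "indep_var borel (a (2*k-1)) borel (a (2*k))"
    using ij by (intro indep_var_of_indep_vars[OF ind])
  then have pair_meas: "pair \<in> measurable M (borel \<Otimes>\<^sub>M borel)"
    and joint: "distr M (borel \<Otimes>\<^sub>M borel) pair = distr M borel (a 1) \<Otimes>\<^sub>M distr M borel (a 1)"
    unfolding indep_var_distribution_eq pair_def using ident[OF ij(1)] ident[OF ij(2)]
    by (auto intro: measurable_Pair)
  have "distr M borel (brow a k) = distr M borel ((\<lambda>(x, y). (1 / sqrt 2) *\<^sub>R (x - y)) \<circ> pair)"
    by (intro distr_cong) (auto simp: brow_def pair_def)
  also have "\<dots> = distr (distr M (borel \<Otimes>\<^sub>M borel) pair) borel (\<lambda>(x, y). (1 / sqrt 2) *\<^sub>R (x - y))"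
    by (rule distr_distr[symmetric, OF _ pair_meas]) measurable
  finally show ?thesis unfolding joint .
qed

lemma (in prob_space) distr_brow_vector:
  fixes a :: "nat \<Rightarrow> 'a \<Rightarrow> real^'n"
  assumes m: "m \<ge> 2" and ind: "indep_vars (\<lambda>_. borel) a {1..m}"
    and ident: "\<And>i. i \<in> {1..m} \<Longrightarrow> distr M borel (a i) = distr M borel (a 1)"
  shows "distr M (PiM {1..m div 2} (\<lambda>_. borel)) (\<lambda>w. \<lambda>k\<in>{1..m div 2}. brow a k w)
          = PiM {1..m div 2} (\<lambda>_. distr M borel (brow a 1))"
proof -
  have ind_b: "indep_vars (\<lambda>_. borel) (brow a) {1..m div 2}"
    by (rule indep_vars_brow[OF _ ind]) simp
  have "distr M (PiM {1..m div 2} (\<lambda>_. borel)) (\<lambda>w. \<lambda>k\<in>{1..m div 2}. brow a k w)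
          = PiM {1..m div 2} (\<lambda>k. distr M borel (brow a k))"
    using ind_b m indep_vars_iff_distr_eq_PiM'[where I="{1..m div 2}" and M'="\<lambda>_. borel" and X="brow a"]
    by (auto simp: indep_vars_def)
  also have "\<dots> = PiM {1..m div 2} (\<lambda>_. distr M borel (brow a 1))"
    using m distr_brow[OF ind ident] by (intro PiM_cong refl) auto
  finally show ?thesis .
qed

lemma (in prob_space) distr_pair_indep_set:
  assumes X: "X \<in> measurable M S" and Y: "Y \<in> measurable M T" and g: "g \<in> measurable S S'"
    and ind: "indep_set (sets (vimage_algebra (space M) X S)) (sets (vimage_algebra (space M) Y T))"
  shows "distr M (S' \<Otimes>\<^sub>M T) (\<lambda>w. (g (X w), Y w)) = distr M S' (\<lambda>w. g (X w)) \<Otimes>\<^sub>M distr M T Y"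
proof (rule pair_measure_eqI[symmetric])
  have gX: "(\<lambda>w. g (X w)) \<in> measurable M S'" using measurable_compose[OF X g] .
  show "sigma_finite_measure (distr M S' (\<lambda>w. g (X w)))" "sigma_finite_measure (distr M T Y)"
    by (intro prob_space_imp_sigma_finite prob_space_distr gX Y)+
  show "sets (distr M S' (\<lambda>w. g (X w)) \<Otimes>\<^sub>M distr M T Y) = sets (distr M (S' \<Otimes>\<^sub>M T) (\<lambda>w. (g (X w), Y w)))"
    unfolding sets_distr by (intro sets_pair_measure_cong) auto
  fix A B assume "A \<in> sets (distr M S' (\<lambda>w. g (X w)))" and "B \<in> sets (distr M T Y)"
  then have A: "A \<in> sets S'" and B: "B \<in> sets T" by auto
  have preimage: "(\<lambda>w. g (X w)) -` A \<inter> space M = X -` (g -` A \<inter> space S) \<inter> space M"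
    using measurable_space[OF X] by auto
  have "prob (X -` (g -` A \<inter> space S) \<inter> space M \<inter> (Y -` B \<inter> space M))
      = prob (X -` (g -` A \<inter> space S) \<inter> space M) * prob (Y -` B \<inter> space M)"
    by (intro indep_setD[OF ind] in_vimage_algebra measurable_sets[OF g A] B)
  moreover have "(\<lambda>w. (g (X w), Y w)) -` (A \<times> B) \<inter> space M = (\<lambda>w. g (X w)) -` A \<inter> space M \<inter> (Y -` B \<inter> space M)"
    by auto
  ultimately show "emeasure (distr M S' (\<lambda>w. g (X w))) A * emeasure (distr M T Y) B
      = emeasure (distr M (S' \<Otimes>\<^sub>M T) (\<lambda>w. (g (X w), Y w))) (A \<times> B)"
    using A B gX Y by (simp add: emeasure_distr emeasure_eq_measure ennreal_mult measurable_Pair preimage)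
qed

lemma (in prob_space) distr_brow_rademacher_vectors:
  fixes a :: "nat \<Rightarrow> 'a \<Rightarrow> real^'n" and eps :: "nat \<Rightarrow> 'a \<Rightarrow> real"
  assumes m: "m \<ge> 2"
    and a_meas: "\<And>i. i \<in> {1..m} \<Longrightarrow> a i \<in> borel_measurable M"
    and ind: "indep_vars (\<lambda>_. borel) a {1..m}"
    and ident: "\<And>i. i \<in> {1..m} \<Longrightarrow> distr M borel (a i) = distr M borel (a 1)"
    and rad: "\<And>k. k \<in> {1..m div 2} \<Longrightarrow> rademacher M (eps k)"
    and ind_eps: "indep_vars (\<lambda>_. borel) eps {1..m div 2}"
    and ind_a_eps: "indep_set
           (sets (vimage_algebra (space M) (\<lambda>w. restrict (\<lambda>i. a i w) {1..m})
                   (PiM {1..m} (\<lambda>_. borel))))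
           (sets (vimage_algebra (space M) (\<lambda>w. restrict (\<lambda>k. eps k w) {1..m div 2})
                   (PiM {1..m div 2} (\<lambda>_. borel))))"
  shows "distr M (PiM {1..m div 2} (\<lambda>_. borel) \<Otimes>\<^sub>M PiM {1..m div 2} (\<lambda>_. borel))
            (\<lambda>w. (\<lambda>k\<in>{1..m div 2}. brow a k w, \<lambda>k\<in>{1..m div 2}. eps k w))
         = PiM {1..m div 2} (\<lambda>_. distr M borel (brow a 1))
             \<Otimes>\<^sub>M PiM {1..m div 2} (\<lambda>_. distr M borel (eps 1))"
proof -
  define I where "I = {1..m div 2}"
  define T where "T y = (\<lambda>k\<in>I. (1 / sqrt 2) *\<^sub>R (y (2*k-1) - y (2*k)))" for y :: "nat \<Rightarrow> real^'n"
  have measurable_eps[measurable]: "eps k \<in> borel_measurable M" if "k \<in> I" for k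
    using rad[of k] that by (simp add: rademacher_def I_def)
  have T_meas: "T \<in> measurable (PiM {1..m} (\<lambda>_. borel)) (PiM I (\<lambda>_. borel :: (real^'n) measure))"
    unfolding T_def
  proof (rule measurable_restrict)
    fix k assume "k \<in> I"
    then have [measurable]: "(\<lambda>y. y (2*k-1)) \<in> borel_measurable (PiM {1..m} (\<lambda>_. borel :: (real^'n) measure))"
      "(\<lambda>y. y (2*k)) \<in> borel_measurable (PiM {1..m} (\<lambda>_. borel :: (real^'n) measure))"
      by (auto intro!: measurable_component_singleton simp: I_def)
    show "(\<lambda>y :: nat \<Rightarrow> real^'n. (1 / sqrt 2) *\<^sub>R (y (2*k-1) - y (2*k))) \<in> borel_measurable (PiM {1..m} (\<lambda>_. borel))"
      by measurable
  qed
  have T_a: "T (\<lambda>i\<in>{1..m}. a i w) = (\<lambda>k\<in>I. brow a k w)" for w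
    by (auto simp: T_def I_def brow_def fun_eq_iff)
  have "distr M (PiM I (\<lambda>_. borel) \<Otimes>\<^sub>M PiM I (\<lambda>_. borel)) (\<lambda>w. (T (\<lambda>i\<in>{1..m}. a i w), \<lambda>k\<in>I. eps k w))
      = distr M (PiM I (\<lambda>_. borel)) (\<lambda>w. T (\<lambda>i\<in>{1..m}. a i w)) \<Otimes>\<^sub>M distr M (PiM I (\<lambda>_. borel)) (\<lambda>w. \<lambda>k\<in>I. eps k w)"
    by (rule distr_pair_indep_set[OF _ _ T_meas ind_a_eps[folded I_def]])
      (auto intro!: measurable_restrict a_meas)
  then have "distr M (PiM I (\<lambda>_. borel) \<Otimes>\<^sub>M PiM I (\<lambda>_. borel)) (\<lambda>w. (\<lambda>k\<in>I. brow a k w, \<lambda>k\<in>I. eps k w))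
      = distr M (PiM I (\<lambda>_. borel)) (\<lambda>w. \<lambda>k\<in>I. brow a k w) \<Otimes>\<^sub>M distr M (PiM I (\<lambda>_. borel)) (\<lambda>w. \<lambda>k\<in>I. eps k w)"
    by (simp only: T_a)
  also have "distr M (PiM I (\<lambda>_. borel)) (\<lambda>w. \<lambda>k\<in>I. brow a k w) = PiM I (\<lambda>_. distr M borel (brow a 1))"
    unfolding I_def by (rule distr_brow_vector[OF m ind ident])
  also have "distr M (PiM I (\<lambda>_. borel)) (\<lambda>w. \<lambda>k\<in>I. eps k w) = PiM I (\<lambda>k. distr M borel (eps k))"
    using m ind_eps indep_vars_iff_distr_eq_PiM'[where I=I and M'="\<lambda>_. borel" and X=eps]
    by (auto simp: I_def)
  also have "\<dots> = PiM I (\<lambda>_. distr M borel (eps 1))"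
    using m by (intro PiM_cong refl rademacher_distr_eq rad) (auto simp: I_def)
  finally show ?thesis unfolding I_def .
qed

lemma sum_consecutive_pairs:
  fixes f :: "nat \<Rightarrow> 'a::comm_monoid_add"
  shows "(\<Sum>i\<in>{1..2*p}. f i) = (\<Sum>k\<in>{1..p}. f (2*k-1) + f (2*k))"
proof (induction p)
  case (Suc p)
  have "{1..2 * Suc p} = insert (2*p+2) (insert (2*p+1) {1..2*p})" by auto
  then show ?case using Suc by (simp add: ac_simps)
qed simp

lemma Anorm_ge_sum_abs_brow:
  fixes a :: "nat \<Rightarrow> 'w \<Rightarrow> real^'n"
  assumes p: "p \<ge> 1" "2 * p \<le> m"
  shows "Anorm m a w v \<ge> (\<Sum>k\<in>{1..p}. \<bar>brow a k w \<bullet> v\<bar>) / sqrt (real p)"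
proof -
  define q where "q i = (a i w \<bullet> v)\<^sup>2" for i
  have pair: "(brow a k w \<bullet> v)\<^sup>2 \<le> q (2*k-1) + q (2*k)" for k
  proof -
    have "(brow a k w \<bullet> v)\<^sup>2 = (a (2*k-1) w \<bullet> v - a (2*k) w \<bullet> v)\<^sup>2 / 2"
      by (simp add: brow_def inner_diff_left power_divide power_mult_distrib)
    also have "\<dots> \<le> q (2*k-1) + q (2*k)"
    proof -
      have "0 \<le> (a (2*k-1) w \<bullet> v + a (2*k) w \<bullet> v)\<^sup>2" by simp
      then show ?thesis unfolding q_def by (simp add: power2_eq_square field_simps)
    qed
    finally show ?thesis .
  qed
  have "(\<Sum>k\<in>{1..p}. (brow a k w \<bullet> v)\<^sup>2) \<le> (\<Sum>i\<in>{1..2*p}. q i)"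
    unfolding sum_consecutive_pairs by (intro sum_mono pair)
  also have "\<dots> \<le> (\<Sum>i\<in>{1..m}. q i)" using p by (intro sum_mono2) (auto simp: q_def)
  finally have squares: "(\<Sum>k\<in>{1..p}. (brow a k w \<bullet> v)\<^sup>2) \<le> (\<Sum>i\<in>{1..m}. q i)" .
  have "(\<Sum>k\<in>{1..p}. \<bar>brow a k w \<bullet> v\<bar>) \<le> sqrt ((\<Sum>k\<in>{1..p}. (brow a k w \<bullet> v)\<^sup>2) * real p)"
    using sum_squared_le_sum_of_squares[of "\<lambda>k. \<bar>brow a k w \<bullet> v\<bar>" "{1..p}"] by (intro real_le_rsqrt) simp
  also have "\<dots> \<le> Anorm m a w v * sqrt (real p)"
    using squares by (simp add: Anorm_def q_def real_sqrt_mult mult_right_mono)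
  finally show ?thesis using p by (simp add: field_simps)
qed

section \<open>Small-ball estimates\<close>

lemma (in prob_space) prob_abs_ge_le_integral_min:
  fixes f :: "'a \<Rightarrow> real"
  assumes [measurable]: "f \<in> borel_measurable M" and "0 \<le> \<xi>" "\<xi> \<le> \<eta>"
  shows "\<xi> * prob {x \<in> space M. \<eta> \<le> \<bar>f x\<bar>} \<le> (\<integral>x. min \<bar>f x\<bar> \<xi> \<partial>M)"
proof -
  have [measurable]: "{x \<in> space M. \<eta> \<le> \<bar>f x\<bar>} \<in> events" by measurable
  have "\<xi> * prob {x \<in> space M. \<eta> \<le> \<bar>f x\<bar>} = (\<integral>x. \<xi> * indicator {x \<in> space M. \<eta> \<le> \<bar>f x\<bar>} x \<partial>M)"
    by simp
  also have "\<dots> \<le> (\<integral>x. min \<bar>f x\<bar> \<xi> \<partial>M)"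
    using assms by (intro integral_mono integrable_const_bound[where B=\<xi>]) (auto split: split_indicator)
  finally show ?thesis .
qed

lemma continuous_on_integral_min_abs_inner:
  fixes \<mu> :: "'a::euclidean_space measure"
  assumes "prob_space \<mu>" and sets: "sets \<mu> = sets borel"
  shows "continuous_on UNIV (\<lambda>v. \<integral>y. min \<bar>y \<bullet> v\<bar> \<xi> \<partial>\<mu>)"
proof (rule continuous_on_sequentiallyI)
  interpret prob_space \<mu> by fact
  fix u :: "nat \<Rightarrow> 'a" and v assume "u \<longlonglongrightarrow> v"
  show "(\<lambda>n. \<integral>y. min \<bar>y \<bullet> u n\<bar> \<xi> \<partial>\<mu>) \<longlonglongrightarrow> (\<integral>y. min \<bar>y \<bullet> v\<bar> \<xi> \<partial>\<mu>)"
  proof (rule integral_dominated_convergence[where w="\<lambda>_. \<bar>\<xi>\<bar>"])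
    show "AE y in \<mu>. (\<lambda>n. min \<bar>y \<bullet> u n\<bar> \<xi>) \<longlonglongrightarrow> min \<bar>y \<bullet> v\<bar> \<xi>"
      using \<open>u \<longlonglongrightarrow> v\<close> by (intro AE_I2 tendsto_intros)
  qed (auto simp: measurable_cong_sets[OF sets refl])
qed

definition linear_rademacher_average :: "'v::real_inner set \<Rightarrow> 'i set \<Rightarrow> ('i \<Rightarrow> 'v) \<Rightarrow> real" where
  "linear_rademacher_average D I x
     = (\<Sum>e\<in>sign_vectors I. bdd_SUP D (\<lambda>v. \<Sum>k\<in>I. e k * (x k \<bullet> v))) / 2 ^ card I"

lemma linear_rademacher_average_eq:
  assumes "\<forall>e\<in>sign_vectors I. bdd_above ((\<lambda>v. \<Sum>k\<in>I. e k * (x k \<bullet> v)) ` D)"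
  shows "linear_rademacher_average D I x = rademacher_average (\<lambda>v y. y \<bullet> v) D I x"
  using assms by (simp add: linear_rademacher_average_def rademacher_average_def bdd_SUP_def)

lemma (in rademacher_law) integral_pair_PiM_sign_vectors:
  fixes F :: "'a \<times> ('i \<Rightarrow> real) \<Rightarrow> real"
  assumes Pb: "prob_space Pb" and I: "finite I"
    and F_meas: "F \<in> borel_measurable (Pb \<Otimes>\<^sub>M PiM I (\<lambda>_. R))"
    and F_int: "integrable (Pb \<Otimes>\<^sub>M PiM I (\<lambda>_. R)) F"
  shows "integrable Pb (\<lambda>x. (\<Sum>e\<in>sign_vectors I. F (x, e)) / 2 ^ card I)"
    and "(\<integral>xe. F xe \<partial>(Pb \<Otimes>\<^sub>M PiM I (\<lambda>_. R))) = (\<integral>x. (\<Sum>e\<in>sign_vectors I. F (x, e)) / 2 ^ card I \<partial>Pb)"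
proof -
  interpret PR: prob_space "PiM I (\<lambda>_. R)" by (intro prob_space_PiM prob_space_axioms)
  interpret PP: pair_sigma_finite Pb "PiM I (\<lambda>_. R)"
    using Pb by (simp add: pair_sigma_finite_def prob_space_imp_sigma_finite PR.sigma_finite_measure_axioms)
  have inner: "(\<integral>e. F (x, e) \<partial>PiM I (\<lambda>_. R)) = (\<Sum>e\<in>sign_vectors I. F (x, e)) / 2 ^ card I"
    if "x \<in> space Pb" for x
    using integral_PiM_sign_vectors[OF I measurable_Pair2[OF F_meas that]] .
  show "integrable Pb (\<lambda>x. (\<Sum>e\<in>sign_vectors I. F (x, e)) / 2 ^ card I)"
    using PP.integrable_fst'[OF F_int]
    by (rule Bochner_Integration.integrable_cong[THEN iffD1, OF refl inner, rotated])
  show "(\<integral>xe. F xe \<partial>(Pb \<Otimes>\<^sub>M PiM I (\<lambda>_. R))) = (\<integral>x. (\<Sum>e\<in>sign_vectors I. F (x, e)) / 2 ^ card I \<partial>Pb)"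
    using PP.integral_fst'[OF F_int] inner by (simp cong: Bochner_Integration.integral_cong)
qed

lemma (in rademacher_law) AE_pair_PiM_sign_vectors:
  assumes Pb: "prob_space Pb" and I: "finite I" and AE: "AE xe in Pb \<Otimes>\<^sub>M PiM I (\<lambda>_. R). P xe"
  shows "AE x in Pb. \<forall>e\<in>sign_vectors I. P (x, e)"
proof -
  interpret PR: prob_space "PiM I (\<lambda>_. R)" by (intro prob_space_PiM prob_space_axioms)
  interpret PP: pair_sigma_finite Pb "PiM I (\<lambda>_. R)"
    using Pb by (simp add: pair_sigma_finite_def prob_space_imp_sigma_finite PR.sigma_finite_measure_axioms)
  show ?thesis
    using PP.AE_pair[OF AE]
  proof eventually_elim
    case (elim x)
    show ?case
    proof
      fix e assume "e \<in> sign_vectors I"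
      then show "P (x, e)"
        by (intro AE_measure_singleton[OF _ elim]) (simp add: measure_PiM_sign_vector[OF I])
    qed
  qed
qed

lemma SUP_hvec_eq_bdd_SUP:
  fixes E D :: "(real^'n) set"
  assumes D: "D \<subseteq> E" "E \<subseteq> closure D" "D \<noteq> {}" and m: "m \<ge> 2"
    and bdd: "bdd_above ((\<lambda>u. hvec m a eps w \<bullet> u) ` E)"
  shows "bdd_above ((\<lambda>v. \<Sum>k\<in>{1..m div 2}. eps k w * (brow a k w \<bullet> v)) ` D)"
    and "(SUP u\<in>E. hvec m a eps w \<bullet> u)
      = bdd_SUP D (\<lambda>v. \<Sum>k\<in>{1..m div 2}. eps k w * (brow a k w \<bullet> v)) / sqrt (real (m div 2))"
proof -
  define S where "S v = (\<Sum>k\<in>{1..m div 2}. eps k w * (brow a k w \<bullet> v))" for v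
  have p: "sqrt (real (m div 2)) > 0" using m by simp
  have hvec_inner: "hvec m a eps w \<bullet> u = (1 / sqrt (real (m div 2))) * S u" for u
    by (simp add: hvec_def inner_sum_left S_def)
  obtain B where "\<And>u. u \<in> E \<Longrightarrow> (1 / sqrt (real (m div 2))) * S u \<le> B"
    using bdd by (auto simp: bdd_above_def hvec_inner)
  then show bdd_D: "bdd_above (S ` D)"
    using D(1) p by (intro bdd_aboveI2[of _ _ "sqrt (real (m div 2)) * B"]) (auto simp: field_simps)
  have "(SUP u\<in>E. hvec m a eps w \<bullet> u) = (SUP u\<in>D. hvec m a eps w \<bullet> u)"
    by (rule cSUP_closure_eq[OF _ D bdd]) (intro continuous_intros)
  also have "\<dots> = (SUP u\<in>D. (1 / sqrt (real (m div 2))) * S u)"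
    by (simp only: hvec_inner)
  also have "\<dots> = (1 / sqrt (real (m div 2))) * (SUP u\<in>D. S u)"
    by (rule cSUP_const_mult) (use p bdd_D D(3) in auto)
  finally show "(SUP u\<in>E. hvec m a eps w \<bullet> u) = bdd_SUP D S / sqrt (real (m div 2))"
    using bdd_D by (simp add: bdd_SUP_def)
qed

locale small_ball_sample = prob_space M for M :: "'w measure" +
  fixes a :: "nat \<Rightarrow> 'w \<Rightarrow> real^'n" and eps :: "nat \<Rightarrow> 'w \<Rightarrow> real" and m :: nat
  assumes m_ge_2: "m \<ge> 2"
    and a_meas: "\<And>i. i \<in> {1..m} \<Longrightarrow> a i \<in> borel_measurable M"
    and indep_a: "indep_vars (\<lambda>_. borel) a {1..m}"
    and ident_a: "\<And>i. i \<in> {1..m} \<Longrightarrow> distr M borel (a i) = distr M borel (a 1)"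
    and rademacher_eps: "\<And>k. k \<in> {1..m div 2} \<Longrightarrow> rademacher M (eps k)"
    and indep_eps: "indep_vars (\<lambda>_. borel) eps {1..m div 2}"
    and indep_a_eps: "indep_set
           (sets (vimage_algebra (space M) (\<lambda>w. restrict (\<lambda>i. a i w) {1..m})
                   (PiM {1..m} (\<lambda>_. borel))))
           (sets (vimage_algebra (space M) (\<lambda>w. restrict (\<lambda>k. eps k w) {1..m div 2})
                   (PiM {1..m div 2} (\<lambda>_. borel))))"
begin

lemma measurable_brow[measurable]: "k \<in> {1..m div 2} \<Longrightarrow> brow a k \<in> borel_measurable M"
  by (intro borel_measurable_brow a_meas) auto

lemma measurable_eps[measurable]: "k \<in> {1..m div 2} \<Longrightarrow> eps k \<in> borel_measurable M"
  using rademacher_eps by (simp add: rademacher_def)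

lemma prob_space_law_brow: "prob_space (distr M borel (brow a 1))"
  using m_ge_2 by (intro prob_space_distr measurable_brow) auto

lemma Wmean_eq_integral_linear_rademacher_average:
  fixes E D :: "(real^'n) set"
  assumes D: "countable D" "D \<subseteq> E" "E \<subseteq> closure D" "D \<noteq> {}"
    and AE_bdd: "AE w in M. bdd_above ((\<lambda>u. hvec m a eps w \<bullet> u) ` E)"
    and integrable_sup: "integrable M (\<lambda>w. SUP u\<in>E. hvec m a eps w \<bullet> u)"
  shows "AE x in PiM {1..m div 2} (\<lambda>_. distr M borel (brow a 1)).
           \<forall>e\<in>sign_vectors {1..m div 2}. bdd_above ((\<lambda>v. \<Sum>k\<in>{1..m div 2}. e k * (x k \<bullet> v)) ` D)"
    and "integrable (PiM {1..m div 2} (\<lambda>_. distr M borel (brow a 1)))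
           (linear_rademacher_average D {1..m div 2})"
    and "Wmean M E (hvec m a eps) = (\<integral>x. linear_rademacher_average D {1..m div 2} x
           \<partial>PiM {1..m div 2} (\<lambda>_. distr M borel (brow a 1))) / sqrt (real (m div 2))"
proof -
  define I where "I = {1..m div 2}"
  define Pb where "Pb = PiM I (\<lambda>_. distr M borel (brow a 1))"
  define PR where "PR = PiM I (\<lambda>_. distr M borel (eps 1))"
  define \<Phi> where "\<Phi> w = (\<lambda>k\<in>I. brow a k w, \<lambda>k\<in>I. eps k w)" for w
  define S where "S v xe = (\<Sum>k\<in>I. snd xe k * (fst xe k \<bullet> v))"
    for v and xe :: "(nat \<Rightarrow> real^'n) \<times> (nat \<Rightarrow> real)"
  define F where "F xe = bdd_SUP D (\<lambda>v. S v xe)" for xe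
  interpret R: rademacher_law "distr M borel (eps 1)"
    using rademacher_eps[of 1] m_ge_2 by (intro rademacher_law_distr) auto
  have Pb: "prob_space Pb" unfolding Pb_def by (intro prob_space_PiM prob_space_law_brow)
  have sets_PP: "sets (Pb \<Otimes>\<^sub>M PR) = sets (PiM I (\<lambda>_. borel) \<Otimes>\<^sub>M PiM I (\<lambda>_. borel))"
    unfolding Pb_def PR_def by (intro sets_pair_measure_cong sets_PiM_cong) auto
  have \<Phi>_meas: "\<Phi> \<in> measurable M (Pb \<Otimes>\<^sub>M PR)"
    unfolding measurable_cong_sets[OF refl sets_PP] \<Phi>_def by (intro measurable_Pair measurable_restrict) (auto simp: I_def)
  have "distr M (Pb \<Otimes>\<^sub>M PR) \<Phi> = distr M (PiM I (\<lambda>_. borel) \<Otimes>\<^sub>M PiM I (\<lambda>_. borel)) \<Phi>"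
    by (rule distr_cong[OF refl sets_PP refl])
  also have "\<dots> = Pb \<Otimes>\<^sub>M PR"
    unfolding \<Phi>_def Pb_def PR_def I_def
    by (rule distr_brow_rademacher_vectors[OF m_ge_2 a_meas indep_a ident_a rademacher_eps indep_eps indep_a_eps])
  finally have law: "distr M (Pb \<Otimes>\<^sub>M PR) \<Phi> = Pb \<Otimes>\<^sub>M PR" .
  have S_meas: "S v \<in> borel_measurable (Pb \<Otimes>\<^sub>M PR)" for v
    unfolding S_def measurable_cong_sets[OF sets_PP refl] by measurable
  have F_meas: "F \<in> borel_measurable (Pb \<Otimes>\<^sub>M PR)"
    unfolding F_def using D(1) S_meas by (rule borel_measurable_bdd_SUP)
  have AE_M: "AE w in M. bdd_above ((\<lambda>v. S v (\<Phi> w)) ` D)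
      \<and> (SUP u\<in>E. hvec m a eps w \<bullet> u) = F (\<Phi> w) / sqrt (real (m div 2))"
    using AE_bdd
  proof eventually_elim
    case (elim w)
    show ?case
      using SUP_hvec_eq_bdd_SUP[OF D(2-4) m_ge_2 elim] unfolding F_def S_def \<Phi>_def I_def by simp
  qed
  have "integrable M (\<lambda>w. F (\<Phi> w) / sqrt (real (m div 2)))"
    by (rule integrable_cong_AE_imp[OF integrable_sup])
      (use measurable_compose[OF \<Phi>_meas F_meas] AE_M in \<open>auto elim: eventually_mono\<close>)
  then have "integrable M (\<lambda>w. sqrt (real (m div 2)) * (F (\<Phi> w) / sqrt (real (m div 2))))"
    by (rule integrable_mult_right)
  then have "integrable (Pb \<Otimes>\<^sub>M PR) F"
    using integrable_distr_eq[OF \<Phi>_meas F_meas] law m_ge_2 by simp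
  note fubini = R.integral_pair_PiM_sign_vectors[OF Pb _ F_meas[unfolded PR_def] this[unfolded PR_def], folded I_def]
  have "Measurable.pred (Pb \<Otimes>\<^sub>M PR) (\<lambda>xe. bdd_above ((\<lambda>v. S v xe) ` D))"
    unfolding bdd_above_countable_iff[OF D(1,4)] using S_meas by measurable
  then have "AE xe in distr M (Pb \<Otimes>\<^sub>M PR) \<Phi>. bdd_above ((\<lambda>v. S v xe) ` D)"
    using AE_M by (subst AE_distr_iff[OF \<Phi>_meas]) (auto simp: pred_def elim: eventually_mono)
  from R.AE_pair_PiM_sign_vectors[OF Pb _ this[unfolded law, unfolded PR_def]]
  show "AE x in PiM {1..m div 2} (\<lambda>_. distr M borel (brow a 1)).
      \<forall>e\<in>sign_vectors {1..m div 2}. bdd_above ((\<lambda>v. \<Sum>k\<in>{1..m div 2}. e k * (x k \<bullet> v)) ` D)"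
    unfolding Pb_def I_def S_def by simp
  show "integrable (PiM {1..m div 2} (\<lambda>_. distr M borel (brow a 1))) (linear_rademacher_average D {1..m div 2})"
    using fubini(1) by (simp add: linear_rademacher_average_def[abs_def] Pb_def I_def F_def S_def)
  have "Wmean M E (hvec m a eps) = (\<integral>w. F (\<Phi> w) / sqrt (real (m div 2)) \<partial>M)"
    unfolding Wmean_def using integrable_sup measurable_compose[OF \<Phi>_meas F_meas] AE_M
    by (intro integral_cong_AE) (auto elim: eventually_mono)
  also have "\<dots> = (\<integral>xe. F xe \<partial>(Pb \<Otimes>\<^sub>M PR)) / sqrt (real (m div 2))"
    using integral_distr[OF \<Phi>_meas F_meas] law by simp
  finally show "Wmean M E (hvec m a eps) = (\<integral>x. linear_rademacher_average D {1..m div 2} x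
      \<partial>PiM {1..m div 2} (\<lambda>_. distr M borel (brow a 1))) / sqrt (real (m div 2))"
    using fubini(2) by (simp add: linear_rademacher_average_def Pb_def PR_def I_def F_def S_def)
qed

lemma expected_empirical_deviation_le_Wmean:
  fixes E D :: "(real^'n) set" and \<xi> :: real
  assumes D: "countable D" "D \<subseteq> E" "E \<subseteq> closure D" "D \<noteq> {}"
    and AE_bdd: "AE w in M. bdd_above ((\<lambda>u. hvec m a eps w \<bullet> u) ` E)"
    and integrable_sup: "integrable M (\<lambda>w. SUP u\<in>E. hvec m a eps w \<bullet> u)"
    and \<xi>: "\<xi> > 0"
  shows "sqrt (real (m div 2)) * (\<integral>x. empirical_deviation (distr M borel (brow a 1)) (\<lambda>v y. min \<bar>y \<bullet> v\<bar> \<xi>) D {1..m div 2} x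
      \<partial>PiM {1..m div 2} (\<lambda>_. distr M borel (brow a 1))) \<le> 2 * Wmean M E (hvec m a eps)"
proof -
  define p where "p = m div 2"
  define I where "I = {1..p}"
  define \<mu> where "\<mu> = distr M borel (brow a 1)"
  define q where "q v y = min \<bar>y \<bullet> v\<bar> \<xi>" for v and y :: "real^'n"
  have p: "p \<ge> 1" using m_ge_2 by (simp add: p_def)
  have \<mu>: "prob_space \<mu>" unfolding \<mu>_def by (rule prob_space_law_brow)
  have q_meas: "q v \<in> borel_measurable \<mu>" for v unfolding q_def \<mu>_def by measurable
  have q_bound: "\<bar>q v y\<bar> \<le> \<xi>" for v y using \<xi> by (simp add: q_def)
  have lip: "\<bar>min \<bar>s\<bar> \<xi> - min \<bar>s'\<bar> \<xi>\<bar> \<le> \<bar>s - s'\<bar>" for s s' :: real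
    unfolding min_def by (auto simp: abs_if)
  note W = Wmean_eq_integral_linear_rademacher_average[OF D AE_bdd integrable_sup, folded p_def I_def \<mu>_def]
  have "(\<integral>x. rademacher_average q D I x \<partial>PiM I (\<lambda>_. \<mu>)) \<le> (\<integral>x. linear_rademacher_average D I x \<partial>PiM I (\<lambda>_. \<mu>))"
  proof (rule integral_mono_AE[OF integrable_rademacher_average[OF \<mu> D(1,4) _ q_meas q_bound] W(2)])
    show "AE x in PiM I (\<lambda>_. \<mu>). rademacher_average q D I x \<le> linear_rademacher_average D I x"
      using W(1)
    proof eventually_elim
      case (elim x)
      have "(\<Sum>e\<in>sign_vectors I. SUP v\<in>D. \<Sum>k\<in>I. e k * min \<bar>x k \<bullet> v\<bar> \<xi>)
          \<le> (\<Sum>e\<in>sign_vectors I. SUP v\<in>D. \<Sum>k\<in>I. e k * (x k \<bullet> v))"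
        by (rule Rademacher_contraction[where \<phi>="\<lambda>s. min \<bar>s\<bar> \<xi>" and t="\<lambda>k v. x k \<bullet> v", OF _ D(4) lip])
          (use elim \<xi> in \<open>auto simp: I_def\<close>)
      then show ?case
        using elim by (simp add: linear_rademacher_average_eq divide_right_mono rademacher_average_def q_def)
    qed
  qed (simp add: I_def)
  then have "2 / real p * (\<integral>x. rademacher_average q D I x \<partial>PiM I (\<lambda>_. \<mu>))
      \<le> 2 / real p * (\<integral>x. linear_rademacher_average D I x \<partial>PiM I (\<lambda>_. \<mu>))"
    by (rule mult_left_mono) simp
  with symmetrization[OF \<mu> p D(1,4) q_meas q_bound, folded I_def]
  have "(\<integral>x. empirical_deviation \<mu> q D I x \<partial>PiM I (\<lambda>_. \<mu>))
      \<le> 2 / real p * (\<integral>x. linear_rademacher_average D I x \<partial>PiM I (\<lambda>_. \<mu>))"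
    by (rule order_trans)
  also have "\<dots> = 2 / sqrt p * Wmean M E (hvec m a eps)"
    using p by (simp add: W(3) field_simps real_sqrt_mult[symmetric])
  finally show ?thesis
    using p unfolding p_def[symmetric] I_def[symmetric] \<mu>_def[symmetric] q_def[symmetric]
    by (simp add: field_simps)
qed

lemma small_ball_event:
  fixes D :: "(real^'n) set" and \<xi> t :: real
  assumes D: "countable D" "D \<noteq> {}" and \<xi>: "\<xi> > 0" and t: "t > 0"
  defines "z \<equiv> empirical_deviation (distr M borel (brow a 1)) (\<lambda>v y. min \<bar>y \<bullet> v\<bar> \<xi>) D {1..m div 2}"
  shows "\<exists>S\<in>sets M. measure M S \<ge> 1 - exp (- 2 * t\<^sup>2) \<and> (\<forall>w\<in>S. w \<in> space M \<and>
    z (\<lambda>k\<in>{1..m div 2}. brow a k w)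
      < (\<integral>x. z x \<partial>PiM {1..m div 2} (\<lambda>_. distr M borel (brow a 1))) + \<xi> * t / sqrt (real (m div 2)))"
proof -
  define p where "p = m div 2"
  define Pb where "Pb = PiM {1..p} (\<lambda>_. distr M borel (brow a 1))"
  define B where "B w = (\<lambda>k\<in>{1..p}. brow a k w)" for w
  define s where "s = \<xi> * t / sqrt p"
  define T where "T = {w \<in> space M. (\<integral>x. z x \<partial>Pb) + s \<le> z (B w)}"
  have p: "p \<ge> 1" using m_ge_2 by (simp add: p_def)
  have sets_Pb: "sets Pb = sets (PiM {1..p} (\<lambda>_. borel :: (real^'n) measure))"
    unfolding Pb_def by (intro sets_PiM_cong) auto
  have B_meas: "B \<in> measurable M Pb"
    unfolding measurable_cong_sets[OF refl sets_Pb] B_def by (intro measurable_restrict) (auto simp: p_def)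
  have law: "distr M Pb B = Pb"
    using distr_cong[OF refl sets_Pb refl, of M B] distr_brow_vector[OF m_ge_2 indep_a ident_a]
    by (simp add: Pb_def B_def p_def)
  have z_meas: "z \<in> borel_measurable Pb"
    unfolding z_def Pb_def p_def using \<xi> m_ge_2
    by (intro borel_measurable_empirical_deviation[where c=\<xi>] prob_space_law_brow D(1)) auto
  have T_eq: "T = B -` {x \<in> space Pb. (\<integral>x. z x \<partial>Pb) + s \<le> z x} \<inter> space M"
    using measurable_space[OF B_meas] by (auto simp: T_def)
  have T_meas: "T \<in> sets M"
    unfolding T_eq using B_meas z_meas by measurable
  have "measure M T = measure Pb {x \<in> space Pb. (\<integral>x. z x \<partial>Pb) + s \<le> z x}"
    unfolding T_eq using z_meas by (subst measure_distr[OF B_meas, symmetric]) (auto simp: law)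
  also have "\<dots> \<le> exp (- 2 * real p * s\<^sup>2 / \<xi>\<^sup>2)"
    unfolding Pb_def z_def p_def using p \<xi> t
    by (intro empirical_deviation_concentration prob_space_law_brow D) (auto simp: s_def p_def)
  also have "\<dots> = exp (- 2 * t\<^sup>2)"
    using p \<xi> by (simp add: s_def power_divide field_simps)
  finally have "measure M (space M - T) \<ge> 1 - exp (- 2 * t\<^sup>2)"
    using prob_compl[OF T_meas] by simp
  moreover have "z (B w) < (\<integral>x. z x \<partial>Pb) + s" if "w \<in> space M - T" for w
    using that by (auto simp: T_def)
  ultimately show ?thesis
    using T_meas by (intro bexI[of _ "space M - T"]) (auto simp: B_def Pb_def s_def p_def)
qed

lemma Anorm_ge_empirical_deviation:
  fixes E D :: "(real^'n) set" and \<xi> :: real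
  assumes D: "E \<subseteq> closure D" and v: "v \<in> E" and \<xi>: "\<xi> > 0"
  shows "sqrt (real (m div 2)) * ((\<integral>y. min \<bar>y \<bullet> v\<bar> \<xi> \<partial>distr M borel (brow a 1))
      - empirical_deviation (distr M borel (brow a 1)) (\<lambda>v y. min \<bar>y \<bullet> v\<bar> \<xi>) D {1..m div 2}
          (\<lambda>k\<in>{1..m div 2}. brow a k w))
    \<le> Anorm m a w v"
proof -
  define p where "p = m div 2"
  define \<mu> where "\<mu> = distr M borel (brow a 1)"
  define mean where "mean u = (\<Sum>k\<in>{1..p}. min \<bar>brow a k w \<bullet> u\<bar> \<xi>) / real p" for u
  have p: "p \<ge> 1" "2 * p \<le> m" using m_ge_2 by (auto simp: p_def)
  then have "p > 0" by simp
  have "sqrt p * mean v \<le> sqrt p * ((\<Sum>k\<in>{1..p}. \<bar>brow a k w \<bullet> v\<bar>) / real p)"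
    unfolding mean_def by (intro mult_left_mono divide_right_mono sum_mono) auto
  also have "\<dots> = (\<Sum>k\<in>{1..p}. \<bar>brow a k w \<bullet> v\<bar>) / sqrt p"
    using \<open>p > 0\<close> by (simp add: field_simps real_sqrt_mult[symmetric])
  also have "\<dots> \<le> Anorm m a w v"
    by (rule Anorm_ge_sum_abs_brow[OF p])
  finally have mean_le: "sqrt p * mean v \<le> Anorm m a w v" .
  have "(\<integral>y. min \<bar>y \<bullet> v\<bar> \<xi> \<partial>\<mu>) - mean v \<le> (SUP u\<in>D. (\<integral>y. min \<bar>y \<bullet> u\<bar> \<xi> \<partial>\<mu>) - mean u)"
  proof (rule le_cSUP_closure[OF _ D _ v, where f="\<lambda>u. (\<integral>y. min \<bar>y \<bullet> u\<bar> \<xi> \<partial>\<mu>) - mean u"])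
    show "continuous_on UNIV (\<lambda>u. (\<integral>y. min \<bar>y \<bullet> u\<bar> \<xi> \<partial>\<mu>) - mean u)"
      unfolding mean_def \<mu>_def
      using \<open>p > 0\<close> by (intro continuous_intros continuous_on_integral_min_abs_inner prob_space_law_brow) auto
    have "(\<integral>y. min \<bar>y \<bullet> u\<bar> \<xi> \<partial>\<mu>) \<le> \<xi>" for u
      using prob_space.abs_integral_le_const[OF prob_space_law_brow, of "\<lambda>y. min \<bar>y \<bullet> u\<bar> \<xi>" \<xi>] \<xi>
      by (simp add: \<mu>_def abs_le_iff)
    moreover have "0 \<le> mean u" for u unfolding mean_def using \<xi> by (simp add: sum_nonneg)
    ultimately show "bdd_above ((\<lambda>u. (\<integral>y. min \<bar>y \<bullet> u\<bar> \<xi> \<partial>\<mu>) - mean u) ` D)"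
      by (intro bdd_aboveI2[of _ _ \<xi>]) (smt (verit))
  qed
  also have "\<dots> = empirical_deviation \<mu> (\<lambda>v y. min \<bar>y \<bullet> v\<bar> \<xi>) D {1..p} (\<lambda>k\<in>{1..p}. brow a k w)"
    unfolding empirical_deviation_def mean_def by (intro SUP_cong refl arg_cong2[where f="(-)"] arg_cong2[where f="(/)"] sum.cong) auto
  finally have "(\<integral>y. min \<bar>y \<bullet> v\<bar> \<xi> \<partial>\<mu>)
      - empirical_deviation \<mu> (\<lambda>v y. min \<bar>y \<bullet> v\<bar> \<xi>) D {1..p} (\<lambda>k\<in>{1..p}. brow a k w) \<le> mean v"
    by linarith
  then have "sqrt p * ((\<integral>y. min \<bar>y \<bullet> v\<bar> \<xi> \<partial>\<mu>)
      - empirical_deviation \<mu> (\<lambda>v y. min \<bar>y \<bullet> v\<bar> \<xi>) D {1..p} (\<lambda>k\<in>{1..p}. brow a k w)) \<le> sqrt p * mean v"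
    by (rule mult_left_mono) simp
  then show ?thesis
    using mean_le unfolding p_def \<mu>_def by linarith
qed

lemma Qxi_le_integral_min:
  fixes E :: "(real^'n) set" and \<xi> :: real
  assumes v: "v \<in> E" and \<xi>: "\<xi> > 0"
  shows "\<xi> * Qxi M (2 * \<xi>) E (brow a 1) \<le> (\<integral>y. min \<bar>y \<bullet> v\<bar> \<xi> \<partial>distr M borel (brow a 1))"
proof -
  interpret \<mu>: prob_space "distr M borel (brow a 1)" by (rule prob_space_law_brow)
  have "Qxi M (2 * \<xi>) E (brow a 1) \<le> measure M {w \<in> space M. \<bar>brow a 1 w \<bullet> v\<bar> \<ge> 2 * \<xi>}"
    unfolding Qxi_def by (rule cINF_lower[OF _ v]) (auto intro!: bdd_belowI[of _ 0])
  also have "\<dots> = measure (distr M borel (brow a 1)) {y \<in> space (distr M borel (brow a 1)). 2 * \<xi> \<le> \<bar>y \<bullet> v\<bar>}"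
    using m_ge_2 by (subst measure_distr) (auto intro!: arg_cong[where f="measure M"])
  finally have "\<xi> * Qxi M (2 * \<xi>) E (brow a 1)
      \<le> \<xi> * measure (distr M borel (brow a 1)) {y \<in> space (distr M borel (brow a 1)). 2 * \<xi> \<le> \<bar>y \<bullet> v\<bar>}"
    using \<xi> by (simp add: mult_left_mono)
  also have "\<dots> \<le> (\<integral>y. min \<bar>y \<bullet> v\<bar> \<xi> \<partial>distr M borel (brow a 1))"
    using \<xi> by (intro \<mu>.prob_abs_ge_le_integral_min) auto
  finally show ?thesis .
qed


lemma Anorm_ge_small_ball_bound:
  fixes E D :: "(real^'n) set" and \<xi> t :: real
  assumes D: "countable D" "D \<subseteq> E" "E \<subseteq> closure D" "D \<noteq> {}"
    and AE_bdd: "AE w in M. bdd_above ((\<lambda>u. hvec m a eps w \<bullet> u) ` E)"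
    and integrable_sup: "integrable M (\<lambda>w. SUP u\<in>E. hvec m a eps w \<bullet> u)"
    and \<xi>: "\<xi> > 0" and v: "v \<in> E"
  defines "z \<equiv> empirical_deviation (distr M borel (brow a 1)) (\<lambda>v y. min \<bar>y \<bullet> v\<bar> \<xi>) D {1..m div 2}"
  assumes z_small: "z (\<lambda>k\<in>{1..m div 2}. brow a k w)
      < (\<integral>x. z x \<partial>PiM {1..m div 2} (\<lambda>_. distr M borel (brow a 1))) + \<xi> * t / sqrt (real (m div 2))"
  shows "\<xi> * sqrt ((real m - 1) / 2) * Qxi M (2 * \<xi>) E (brow a 1) - \<xi> * t - 2 * Wmean M E (hvec m a eps)
    \<le> Anorm m a w v"
proof -
  define p where "p = m div 2"
  define G where "G = (\<integral>y. min \<bar>y \<bullet> v\<bar> \<xi> \<partial>distr M borel (brow a 1))"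
  define Ez where "Ez = (\<integral>x. z x \<partial>PiM {1..p} (\<lambda>_. distr M borel (brow a 1)))"
  have "p > 0" and sqrt_le: "sqrt ((real m - 1) / 2) \<le> sqrt p"
    using m_ge_2 by (auto simp: p_def intro!: real_sqrt_le_mono)
  have "Qxi M (2 * \<xi>) E (brow a 1) \<ge> 0"
    unfolding Qxi_def using v by (intro cINF_greatest measure_nonneg) auto
  then have "\<xi> * sqrt ((real m - 1) / 2) * Qxi M (2 * \<xi>) E (brow a 1) \<le> sqrt p * (\<xi> * Qxi M (2 * \<xi>) E (brow a 1))"
    using mult_right_mono[OF sqrt_le, of "\<xi> * Qxi M (2 * \<xi>) E (brow a 1)"] \<xi> by (simp add: ac_simps)
  also have "\<dots> \<le> sqrt p * G"
    unfolding G_def by (intro mult_left_mono Qxi_le_integral_min v \<xi>) simp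
  finally have Q_le: "\<xi> * sqrt ((real m - 1) / 2) * Qxi M (2 * \<xi>) E (brow a 1) \<le> sqrt p * G" .
  have "sqrt p * z (\<lambda>k\<in>{1..p}. brow a k w) \<le> sqrt p * (Ez + \<xi> * t / sqrt p)"
    using z_small by (intro mult_left_mono) (auto simp: Ez_def p_def)
  then have z_le: "sqrt p * z (\<lambda>k\<in>{1..p}. brow a k w) \<le> sqrt p * Ez + \<xi> * t"
    using \<open>p > 0\<close> by (simp add: distrib_left)
  show ?thesis
    using Q_le z_le Anorm_ge_empirical_deviation[OF D(3) v \<xi>, of w]
      expected_empirical_deviation_le_Wmean[OF D AE_bdd integrable_sup \<xi>]
    unfolding G_def Ez_def p_def z_def[symmetric] by (simp add: right_diff_distrib)
qed

lemma small_ball_lower_bound: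
  fixes E D :: "(real^'n) set" and \<xi> t :: real
  assumes D: "countable D" "D \<subseteq> E" "E \<subseteq> closure D" "D \<noteq> {}"
    and AE_bdd: "AE w in M. bdd_above ((\<lambda>u. hvec m a eps w \<bullet> u) ` E)"
    and integrable_sup: "integrable M (\<lambda>w. SUP u\<in>E. hvec m a eps w \<bullet> u)"
    and t: "t > 0" and \<xi>: "\<xi> > 0"
  shows "\<exists>S\<in>sets M. measure M S \<ge> 1 - exp (- 2 * t\<^sup>2) \<and> (\<forall>w\<in>S. \<forall>v\<in>E.
    \<xi> * sqrt ((real m - 1) / 2) * Qxi M (2 * \<xi>) E (brow a 1) - \<xi> * t - 2 * Wmean M E (hvec m a eps)
      \<le> Anorm m a w v)"
  using small_ball_event[OF D(1,4) \<xi> t]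
  by (elim bexE conjE, intro bexI conjI ballI Anorm_ge_small_ball_bound[OF D AE_bdd integrable_sup \<xi>]) auto

end

theorem theorem4:
  fixes M :: "'w measure" and a :: "nat \<Rightarrow> 'w \<Rightarrow> real^'n" and eps :: "nat \<Rightarrow> 'w \<Rightarrow> real"
    and E :: "(real^'n) set" and m :: nat and t xi :: real
  assumes "prob_space M"
    and "m \<ge> 2"
    and "E \<noteq> {}"
    and "\<And>i. i \<in> {1..m} \<Longrightarrow> a i \<in> borel_measurable M"
    and "prob_space.indep_vars M (\<lambda>_. borel) a {1..m}"
    and "\<And>i. i \<in> {1..m} \<Longrightarrow> distr M borel (a i) = distr M borel (a 1)"
    and "\<And>k. k \<in> {1..m div 2} \<Longrightarrow> rademacher M (eps k)"
    and "prob_space.indep_vars M (\<lambda>_. borel) eps {1..m div 2}"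
    and "prob_space.indep_set M
           (sets (vimage_algebra (space M) (\<lambda>w. restrict (\<lambda>i. a i w) {1..m})
                   (PiM {1..m} (\<lambda>_. borel))))
           (sets (vimage_algebra (space M) (\<lambda>w. restrict (\<lambda>k. eps k w) {1..m div 2})
                   (PiM {1..m div 2} (\<lambda>_. borel))))"
    and "AE w in M. bdd_above ((\<lambda>u. hvec m a eps w \<bullet> u) ` E)"
    and "integrable M (\<lambda>w. SUP u\<in>E. hvec m a eps w \<bullet> u)"
    and "t > 0" and "xi > 0"
  shows "\<exists>S \<in> sets M. measure M S \<ge> 1 - exp (- 2 * t\<^sup>2) \<and>
           (\<forall>w \<in> S. (INF v\<in>E. Anorm m a w v) \<ge>
              xi * sqrt ((real m - 1) / 2) * Qxi M (2 * xi) E (brow a 1) - xi * t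
              - 2 * Wmean M E (hvec m a eps))"
proof -
  interpret small_ball_sample M a eps m
    by (intro small_ball_sample.intro small_ball_sample_axioms.intro) (fact assms)+
  obtain D where D: "countable D" "D \<subseteq> E" "E \<subseteq> closure D" by (rule separable)
  moreover have "D \<noteq> {}" using D assms(3) by auto
  ultimately obtain S where "S \<in> sets M" "measure M S \<ge> 1 - exp (- 2 * t\<^sup>2)"
    and "\<forall>w\<in>S. \<forall>v\<in>E. xi * sqrt ((real m - 1) / 2) * Qxi M (2 * xi) E (brow a 1) - xi * t
      - 2 * Wmean M E (hvec m a eps) \<le> Anorm m a w v"
    using small_ball_lower_bound[OF _ _ _ _ assms(10-13)] by blast
  then show ?thesis
    using assms(3) by (intro bexI[of _ S]) (auto intro!: cINF_greatest)
qed

end
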